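(* 1. $W_v(P_4)=2$ and $D_v(P_4)=3$. 2. $D_\kappa(C_4)=4$ and $W_\kappa(C_4)\ge 3$.
   Context: Graphs are finite simple graphs; $P_4$ is the path on 4 vertices and $C_4$ the cycle on 4 vertices. A graph is $k$-connected if it has more than $k$ vertices, is connected, and remains connected after removal of any $k-1$ vertices; $\kappa(G)$ is the maximum $k$ such that $G$ is $k$-connected; $v(G)$ is the number of vertices. We use first-order logic of graphs with relation symbols for adjacency and equality only; the variable width of a sentence is the number of distinct variables it uses. For a graph parameter $\pi\in\{v,\kappa\}$, $D_\pi(F)$ (resp. $W_\pi(F)$) is the minimum quantifier depth (resp. variable width) of a first-order sentence $\Phi$ for which there is an integer $k$ such that for every connected graph $G$ with $\pi(G)\ge k$, $G\models\Phi$ if and only if $G$ contains a (not necessarily induced) subgraph isomorphic to $F$. *)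

theory Defs
  imports Main
begin

type_synonym graph = "nat set \<times> (nat \<Rightarrow> nat \<Rightarrow> bool)"

definition verts :: "graph \<Rightarrow> nat set" where "verts G = fst G"
definition adj :: "graph \<Rightarrow> nat \<Rightarrow> nat \<Rightarrow> bool" where "adj G = snd G"

definition wf_graph :: "graph \<Rightarrow> bool" where
  "wf_graph G \<longleftrightarrow> finite (verts G)
     \<and> (\<forall>u w. adj G u w \<longrightarrow> u \<in> verts G \<and> w \<in> verts G)
     \<and> (\<forall>u w. adj G u w \<longrightarrow> adj G w u)
     \<and> (\<forall>u. \<not> adj G u u)"

definition edge_rel :: "graph \<Rightarrow> (nat \<times> nat) set" where
  "edge_rel G = {(u, w). u \<in> verts G \<and> w \<in> verts G \<and> adj G u w}"

definition connected :: "graph \<Rightarrow> bool" where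
  "connected G \<longleftrightarrow> verts G \<noteq> {}
     \<and> (\<forall>u\<in>verts G. \<forall>w\<in>verts G. (u, w) \<in> (edge_rel G)\<^sup>*)"

definition del_verts :: "graph \<Rightarrow> nat set \<Rightarrow> graph" where
  "del_verts G S = (verts G - S, \<lambda>u w. adj G u w \<and> u \<notin> S \<and> w \<notin> S)"

definition k_connected :: "nat \<Rightarrow> graph \<Rightarrow> bool" where
  "k_connected k G \<longleftrightarrow> card (verts G) > k \<and> connected G
     \<and> (\<forall>S. S \<subseteq> verts G \<and> card S < k \<longrightarrow> connected (del_verts G S))"

definition kappa :: "graph \<Rightarrow> nat" where
  "kappa G = (GREATEST k. k_connected k G)"

definition nverts :: "graph \<Rightarrow> nat" where
  "nverts G = card (verts G)"

text \<open>Not necessarily induced subgraph containment: injective edge-preserving map.\<close>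
definition contains_subgraph :: "graph \<Rightarrow> graph \<Rightarrow> bool" where
  "contains_subgraph G F \<longleftrightarrow> (\<exists>f. inj_on f (verts F) \<and> f ` verts F \<subseteq> verts G
     \<and> (\<forall>u\<in>verts F. \<forall>w\<in>verts F. adj F u w \<longrightarrow> adj G (f u) (f w)))"

definition P4 :: graph where
  "P4 = ({0,1,2,3}, \<lambda>u w. (u,w) \<in> {(0,1),(1,0),(1,2),(2,1),(2,3),(3,2)})"

definition C4 :: graph where
  "C4 = ({0,1,2,3}, \<lambda>u w. (u,w) \<in> {(0,1),(1,0),(1,2),(2,1),(2,3),(3,2),(3,0),(0,3)})"

datatype fo =
    Adj nat nat
  | Eq nat nat
  | Neg fo
  | Conj fo fo
  | Disj fo fo
  | Impl fo fo
  | Iff fo fo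
  | Ex nat fo
  | All nat fo

fun sat :: "graph \<Rightarrow> (nat \<Rightarrow> nat) \<Rightarrow> fo \<Rightarrow> bool" where
  "sat G a (Adj x y) = adj G (a x) (a y)"
| "sat G a (Eq x y) = (a x = a y)"
| "sat G a (Neg \<phi>) = (\<not> sat G a \<phi>)"
| "sat G a (Conj \<phi> \<psi>) = (sat G a \<phi> \<and> sat G a \<psi>)"
| "sat G a (Disj \<phi> \<psi>) = (sat G a \<phi> \<or> sat G a \<psi>)"
| "sat G a (Impl \<phi> \<psi>) = (sat G a \<phi> \<longrightarrow> sat G a \<psi>)"
| "sat G a (Iff \<phi> \<psi>) = (sat G a \<phi> \<longleftrightarrow> sat G a \<psi>)"
| "sat G a (Ex x \<phi>) = (\<exists>v\<in>verts G. sat G (a(x := v)) \<phi>)"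
| "sat G a (All x \<phi>) = (\<forall>v\<in>verts G. sat G (a(x := v)) \<phi>)"

fun free_vars :: "fo \<Rightarrow> nat set" where
  "free_vars (Adj x y) = {x, y}"
| "free_vars (Eq x y) = {x, y}"
| "free_vars (Neg \<phi>) = free_vars \<phi>"
| "free_vars (Conj \<phi> \<psi>) = free_vars \<phi> \<union> free_vars \<psi>"
| "free_vars (Disj \<phi> \<psi>) = free_vars \<phi> \<union> free_vars \<psi>"
| "free_vars (Impl \<phi> \<psi>) = free_vars \<phi> \<union> free_vars \<psi>"
| "free_vars (Iff \<phi> \<psi>) = free_vars \<phi> \<union> free_vars \<psi>"
| "free_vars (Ex x \<phi>) = free_vars \<phi> - {x}"
| "free_vars (All x \<phi>) = free_vars \<phi> - {x}"

fun vars :: "fo \<Rightarrow> nat set" where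
  "vars (Adj x y) = {x, y}"
| "vars (Eq x y) = {x, y}"
| "vars (Neg \<phi>) = vars \<phi>"
| "vars (Conj \<phi> \<psi>) = vars \<phi> \<union> vars \<psi>"
| "vars (Disj \<phi> \<psi>) = vars \<phi> \<union> vars \<psi>"
| "vars (Impl \<phi> \<psi>) = vars \<phi> \<union> vars \<psi>"
| "vars (Iff \<phi> \<psi>) = vars \<phi> \<union> vars \<psi>"
| "vars (Ex x \<phi>) = insert x (vars \<phi>)"
| "vars (All x \<phi>) = insert x (vars \<phi>)"

fun qdepth :: "fo \<Rightarrow> nat" where
  "qdepth (Adj x y) = 0"
| "qdepth (Eq x y) = 0"
| "qdepth (Neg \<phi>) = qdepth \<phi>"
| "qdepth (Conj \<phi> \<psi>) = max (qdepth \<phi>) (qdepth \<psi>)"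
| "qdepth (Disj \<phi> \<psi>) = max (qdepth \<phi>) (qdepth \<psi>)"
| "qdepth (Impl \<phi> \<psi>) = max (qdepth \<phi>) (qdepth \<psi>)"
| "qdepth (Iff \<phi> \<psi>) = max (qdepth \<phi>) (qdepth \<psi>)"
| "qdepth (Ex x \<phi>) = Suc (qdepth \<phi>)"
| "qdepth (All x \<phi>) = Suc (qdepth \<phi>)"

definition width :: "fo \<Rightarrow> nat" where
  "width \<phi> = card (vars \<phi>)"

definition sentence :: "fo \<Rightarrow> bool" where
  "sentence \<phi> \<longleftrightarrow> free_vars \<phi> = {}"

definition models :: "graph \<Rightarrow> fo \<Rightarrow> bool" where
  "models G \<phi> \<longleftrightarrow> (\<forall>a. sat G a \<phi>)"

definition eventually_defines :: "(graph \<Rightarrow> nat) \<Rightarrow> graph \<Rightarrow> fo \<Rightarrow> bool" where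
  "eventually_defines \<pi> F \<Phi> \<longleftrightarrow> sentence \<Phi> \<and> (\<exists>k. \<forall>G. wf_graph G \<and> connected G \<and> \<pi> G \<ge> k
      \<longrightarrow> (models G \<Phi> \<longleftrightarrow> contains_subgraph G F))"

definition D_param :: "(graph \<Rightarrow> nat) \<Rightarrow> graph \<Rightarrow> nat" where
  "D_param \<pi> F = (LEAST d. \<exists>\<Phi>. eventually_defines \<pi> F \<Phi> \<and> qdepth \<Phi> = d)"

definition W_param :: "(graph \<Rightarrow> nat) \<Rightarrow> graph \<Rightarrow> nat" where
  "W_param \<pi> F = (LEAST w. \<exists>\<Phi>. eventually_defines \<pi> F \<Phi> \<and> width \<Phi> = w)"

end

theory Submission
  imports Defs "HOL-Computational_Algebra.Primes"
begin

(*
  A connected graph on at least four vertices contains P4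
  iff some edge joins two vertices that are both dominating or both not; saying so needs two
  variables and quantifier depth three. C4 is defined by its existential closure, of depth four.

  Lower bounds come from Ehrenfeucht-Fraisse games. The star K(1,n) and the star with one extra
  edge (only the latter contains P4) realise the same one-vertex types (isolated, dominating),
  so Duplicator wins the two-round game on them, and any two nonempty graphs agree on width-one
  sentences. For C4, the point-line incidence graph of the affine plane over Z/p (C4-free, as two
  points lie on at most one line) and K(n,n) minus a Hamiltonian cycle (containing C4) are both
  highly connected and rich: triangle-free, with every extension of a pair of vertices that
  Duplicator needs, so she wins the three-round game and the two-pebble game on them.
*)

section \<open>Ehrenfeucht-Fraisse games\<close>

definition partial_iso :: "graph \<Rightarrow> graph \<Rightarrow> (nat \<times> nat) set \<Rightarrow> bool" where
  "partial_iso G H P \<longleftrightarrow> P \<subseteq> verts G \<times> verts H \<and>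
     (\<forall>u u' v v'. (u,u') \<in> P \<longrightarrow> (v,v') \<in> P \<longrightarrow> (u = v \<longleftrightarrow> u' = v') \<and> (adj G u v \<longleftrightarrow> adj H u' v'))"

fun duplicator_wins :: "nat \<Rightarrow> graph \<Rightarrow> graph \<Rightarrow> (nat \<times> nat) set \<Rightarrow> bool" where
  "duplicator_wins 0 G H P = partial_iso G H P"
| "duplicator_wins (Suc m) G H P \<longleftrightarrow> partial_iso G H P
     \<and> (\<forall>v\<in>verts G. \<exists>w\<in>verts H. duplicator_wins m G H (insert (v,w) P))
     \<and> (\<forall>w\<in>verts H. \<exists>v\<in>verts G. duplicator_wins m G H (insert (v,w) P))"

lemma duplicator_wins_imp_partial_iso: "duplicator_wins m G H P \<Longrightarrow> partial_iso G H P"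
  by (cases m) auto

lemma free_vars_sub_vars: "free_vars \<phi> \<subseteq> vars \<phi>"
  by (induction \<phi>) auto

lemma finite_vars: "finite (vars \<phi>)"
  by (induction \<phi>) auto

lemma bex_ball_transfer:
  assumes "\<forall>v\<in>V. \<exists>w\<in>W. R v w" "\<forall>w\<in>W. \<exists>v\<in>V. R v w"
    and "\<And>v w. R v w \<Longrightarrow> A v \<longleftrightarrow> B w"
  shows "(\<exists>v\<in>V. A v) \<longleftrightarrow> (\<exists>w\<in>W. B w)" "(\<forall>v\<in>V. A v) \<longleftrightarrow> (\<forall>w\<in>W. B w)"
  using assms by metis+

lemma assignment_update_image:
  "(\<lambda>x. (a x, b x)) ` (X - {z}) \<subseteq> P \<Longrightarrow> (\<lambda>x. ((a(z:=v)) x, (b(z:=w)) x)) ` X \<subseteq> insert (v,w) P"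
  by fastforce

lemma duplicator_wins_sat_eq:
  "duplicator_wins m G H P \<Longrightarrow> qdepth \<phi> \<le> m \<Longrightarrow> (\<lambda>x. (a x, b x)) ` free_vars \<phi> \<subseteq> P
   \<Longrightarrow> sat G a \<phi> = sat H b \<phi>"
proof (induction \<phi> arbitrary: m a b P)
  case (Ex z \<psi>)
  then obtain m' where m: "m = Suc m'" "qdepth \<psi> \<le> m'" by (cases m) auto
  have "sat G (a(z:=v)) \<psi> = sat H (b(z:=w)) \<psi>" if "duplicator_wins m' G H (insert (v,w) P)" for v w
    using Ex.prems(3) by (intro Ex.IH[OF that m(2)] assignment_update_image) simp
  then show ?case using Ex.prems(1) m(1)
    by (simp add: bex_ball_transfer(1)[where R = "\<lambda>v w. duplicator_wins m' G H (insert (v,w) P)"])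
next
  case (All z \<psi>)
  then obtain m' where m: "m = Suc m'" "qdepth \<psi> \<le> m'" by (cases m) auto
  have "sat G (a(z:=v)) \<psi> = sat H (b(z:=w)) \<psi>" if "duplicator_wins m' G H (insert (v,w) P)" for v w
    using All.prems(3) by (intro All.IH[OF that m(2)] assignment_update_image) simp
  then show ?case using All.prems(1) m(1)
    by (simp add: bex_ball_transfer(2)[where R = "\<lambda>v w. duplicator_wins m' G H (insert (v,w) P)"])
next
  case (Adj x y)
  then show ?case using duplicator_wins_imp_partial_iso[OF Adj.prems(1)] by (auto simp: partial_iso_def)
next
  case (Eq x y)
  then show ?case using duplicator_wins_imp_partial_iso[OF Eq.prems(1)] by (auto simp: partial_iso_def)
next
  case (Conj \<phi> \<psi>)
  have "sat G a \<phi> = sat H b \<phi>" by (rule Conj.IH(1)[OF Conj.prems(1)]) (use Conj.prems in auto)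
  moreover have "sat G a \<psi> = sat H b \<psi>" by (rule Conj.IH(2)[OF Conj.prems(1)]) (use Conj.prems in auto)
  ultimately show ?case by simp
next
  case (Disj \<phi> \<psi>)
  have "sat G a \<phi> = sat H b \<phi>" by (rule Disj.IH(1)[OF Disj.prems(1)]) (use Disj.prems in auto)
  moreover have "sat G a \<psi> = sat H b \<psi>" by (rule Disj.IH(2)[OF Disj.prems(1)]) (use Disj.prems in auto)
  ultimately show ?case by simp
next
  case (Impl \<phi> \<psi>)
  have "sat G a \<phi> = sat H b \<phi>" by (rule Impl.IH(1)[OF Impl.prems(1)]) (use Impl.prems in auto)
  moreover have "sat G a \<psi> = sat H b \<psi>" by (rule Impl.IH(2)[OF Impl.prems(1)]) (use Impl.prems in auto)
  ultimately show ?case by simp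
next
  case (Iff \<phi> \<psi>)
  have "sat G a \<phi> = sat H b \<phi>" by (rule Iff.IH(1)[OF Iff.prems(1)]) (use Iff.prems in auto)
  moreover have "sat G a \<psi> = sat H b \<psi>" by (rule Iff.IH(2)[OF Iff.prems(1)]) (use Iff.prems in auto)
  ultimately show ?case by simp
qed simp

lemma assignment_image_card_lt:
  assumes "X \<subseteq> W - {z}" "z \<in> W" "finite W" "card W \<le> k"
  shows "finite (f ` X) \<and> card (f ` X) < k"
proof -
  have "card (f ` X) \<le> card (W - {z})"
    using assms(1,3) by (meson card_image_le card_mono finite_Diff finite_subset le_trans)
  moreover have "finite (f ` X)"
    using assms(1,3) by (meson finite_Diff finite_imageI finite_subset)
  ultimately show ?thesis using assms(4) card_Diff1_less[OF assms(3,2)] by linarith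
qed

lemma partial_iso_mono: "partial_iso G H P \<Longrightarrow> Q \<subseteq> P \<Longrightarrow> partial_iso G H Q"
  unfolding partial_iso_def by blast

lemma partial_iso_image_Un:
  "partial_iso G H (f ` (A \<union> B)) \<Longrightarrow> partial_iso G H (f ` A) \<and> partial_iso G H (f ` B)"
  by (meson image_mono partial_iso_mono sup_ge1 sup_ge2)

lemma partial_iso_empty: "partial_iso G H {}"
  by (simp add: partial_iso_def)

text \<open>Duplicator's strategy in the k-pebble game: every partial isomorphism of size below k
  extends, in both directions, to a partial isomorphism.\<close>
definition pebble_extendable :: "nat \<Rightarrow> graph \<Rightarrow> graph \<Rightarrow> bool" where
  "pebble_extendable k G H \<longleftrightarrow> (\<forall>P. partial_iso G H P \<and> finite P \<and> card P < k \<longrightarrow>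
     (\<forall>v\<in>verts G. \<exists>w\<in>verts H. partial_iso G H (insert (v,w) P)) \<and>
     (\<forall>w\<in>verts H. \<exists>v\<in>verts G. partial_iso G H (insert (v,w) P)))"

lemma pebble_extendable_quantifier_step:
  assumes ext: "pebble_extendable k G H" and P: "partial_iso G H P" "finite P" "card P < k"
    and step: "\<And>v w. partial_iso G H (insert (v,w) P) \<Longrightarrow> A v \<longleftrightarrow> B w"
  shows "(\<exists>v\<in>verts G. A v) \<longleftrightarrow> (\<exists>w\<in>verts H. B w)" "(\<forall>v\<in>verts G. A v) \<longleftrightarrow> (\<forall>w\<in>verts H. B w)"
proof -
  have forth_back: "\<forall>v\<in>verts G. \<exists>w\<in>verts H. partial_iso G H (insert (v,w) P)"
    "\<forall>w\<in>verts H. \<exists>v\<in>verts G. partial_iso G H (insert (v,w) P)"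
    using ext P unfolding pebble_extendable_def by blast+
  show "(\<exists>v\<in>verts G. A v) \<longleftrightarrow> (\<exists>w\<in>verts H. B w)" by (rule bex_ball_transfer(1)[OF forth_back step])
  show "(\<forall>v\<in>verts G. A v) \<longleftrightarrow> (\<forall>w\<in>verts H. B w)" by (rule bex_ball_transfer(2)[OF forth_back step])
qed

lemma pebble_extendable_sat_eq:
  assumes ext: "pebble_extendable k G H"
  shows "vars \<phi> \<subseteq> W \<Longrightarrow> finite W \<Longrightarrow> card W \<le> k
    \<Longrightarrow> partial_iso G H ((\<lambda>x. (a x, b x)) ` free_vars \<phi>) \<Longrightarrow> sat G a \<phi> = sat H b \<phi>"
proof (induction \<phi> arbitrary: a b)
  case (Ex z \<psi>)
  let ?P = "(\<lambda>x. (a x, b x)) ` (free_vars \<psi> - {z})"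
  have "finite ?P \<and> card ?P < k"
    using Ex.prems(1-3) free_vars_sub_vars[of \<psi>] by (intro assignment_image_card_lt) auto
  moreover have "sat G (a(z:=v)) \<psi> = sat H (b(z:=w)) \<psi>" if "partial_iso G H (insert (v,w) ?P)" for v w
    using Ex.prems(1-3) partial_iso_mono[OF that assignment_update_image[OF subset_refl]]
    by (intro Ex.IH) auto
  ultimately show ?case using pebble_extendable_quantifier_step(1)[OF ext] Ex.prems(4) by simp
next
  case (All z \<psi>)
  let ?P = "(\<lambda>x. (a x, b x)) ` (free_vars \<psi> - {z})"
  have "finite ?P \<and> card ?P < k"
    using All.prems(1-3) free_vars_sub_vars[of \<psi>] by (intro assignment_image_card_lt) auto
  moreover have "sat G (a(z:=v)) \<psi> = sat H (b(z:=w)) \<psi>" if "partial_iso G H (insert (v,w) ?P)" for v w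
    using All.prems(1-3) partial_iso_mono[OF that assignment_update_image[OF subset_refl]]
    by (intro All.IH) auto
  ultimately show ?case using pebble_extendable_quantifier_step(2)[OF ext] All.prems(4) by simp
next
  case (Conj \<phi> \<psi>)
  note sub = partial_iso_image_Un[OF Conj.prems(4)[simplified]]
  have "sat G a \<phi> = sat H b \<phi>" by (rule Conj.IH(1)) (use Conj.prems sub in auto)
  moreover have "sat G a \<psi> = sat H b \<psi>" by (rule Conj.IH(2)) (use Conj.prems sub in auto)
  ultimately show ?case by simp
next
  case (Disj \<phi> \<psi>)
  note sub = partial_iso_image_Un[OF Disj.prems(4)[simplified]]
  have "sat G a \<phi> = sat H b \<phi>" by (rule Disj.IH(1)) (use Disj.prems sub in auto)
  moreover have "sat G a \<psi> = sat H b \<psi>" by (rule Disj.IH(2)) (use Disj.prems sub in auto)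
  ultimately show ?case by simp
next
  case (Impl \<phi> \<psi>)
  note sub = partial_iso_image_Un[OF Impl.prems(4)[simplified]]
  have "sat G a \<phi> = sat H b \<phi>" by (rule Impl.IH(1)) (use Impl.prems sub in auto)
  moreover have "sat G a \<psi> = sat H b \<psi>" by (rule Impl.IH(2)) (use Impl.prems sub in auto)
  ultimately show ?case by simp
next
  case (Iff \<phi> \<psi>)
  note sub = partial_iso_image_Un[OF Iff.prems(4)[simplified]]
  have "sat G a \<phi> = sat H b \<phi>" by (rule Iff.IH(1)) (use Iff.prems sub in auto)
  moreover have "sat G a \<psi> = sat H b \<psi>" by (rule Iff.IH(2)) (use Iff.prems sub in auto)
  ultimately show ?case by simp
next
  case (Neg \<phi>)
  then show ?case by simp
qed (auto simp: partial_iso_def)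

lemma sat_eq_imp_models_eq: "(\<And>a b. sat G a \<Phi> = sat H b \<Phi>) \<Longrightarrow> models G \<Phi> = models H \<Phi>"
  unfolding models_def by blast

lemma duplicator_wins_models_eq:
  "duplicator_wins m G H {} \<Longrightarrow> qdepth \<Phi> \<le> m \<Longrightarrow> sentence \<Phi> \<Longrightarrow> models G \<Phi> = models H \<Phi>"
  by (intro sat_eq_imp_models_eq duplicator_wins_sat_eq) (auto simp: sentence_def)

lemma pebble_extendable_models_eq:
  "pebble_extendable k G H \<Longrightarrow> width \<Phi> \<le> k \<Longrightarrow> sentence \<Phi> \<Longrightarrow> models G \<Phi> = models H \<Phi>"
  by (intro sat_eq_imp_models_eq pebble_extendable_sat_eq[where W = "vars \<Phi>"])
    (auto simp: sentence_def width_def finite_vars partial_iso_empty)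

section \<open>Duplicator strategies from vertex types\<close>

lemma wf_graph_sym: "wf_graph G \<Longrightarrow> adj G u w \<longleftrightarrow> adj G w u"
  unfolding wf_graph_def by blast

lemma wf_graph_irrefl: "wf_graph G \<Longrightarrow> \<not> adj G u u"
  unfolding wf_graph_def by blast

lemma partial_iso_insert:
  assumes "wf_graph G" "wf_graph H" "partial_iso G H P" "v \<in> verts G" "w \<in> verts H"
    and "\<And>x x'. (x,x') \<in> P \<Longrightarrow> (v = x \<longleftrightarrow> w = x') \<and> (adj G v x \<longleftrightarrow> adj H w x')"
  shows "partial_iso G H (insert (v,w) P)"
  using assms unfolding partial_iso_def
  by (smt (verit, ccfv_threshold) insertE insert_subset mem_Sigma_iff old.prod.inject wf_graph_irrefl wf_graph_sym)

lemma partial_iso_singleton: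
  "wf_graph G \<Longrightarrow> wf_graph H \<Longrightarrow> v \<in> verts G \<Longrightarrow> w \<in> verts H \<Longrightarrow> partial_iso G H {(v,w)}"
  using partial_iso_insert[OF _ _ partial_iso_empty] by blast

lemma converse_insert_pair [simp]: "(insert (a,b) P)\<inverse> = insert (b,a) (P\<inverse>)"
  by auto

lemma partial_iso_converse: "partial_iso H G (P\<inverse>) \<longleftrightarrow> partial_iso G H P"
proof -
  have *: "partial_iso H G (P\<inverse>)" if "partial_iso G H P" for G H P
    using that unfolding partial_iso_def by blast
  show ?thesis using *[of G H P] *[of H G "P\<inverse>"] by auto
qed

lemma duplicator_wins_converse: "duplicator_wins m H G (P\<inverse>) \<longleftrightarrow> duplicator_wins m G H P"
proof (induction m arbitrary: P)
  case (Suc m)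
  then show ?case using partial_iso_converse by (metis converse_insert_pair duplicator_wins.simps(2))
qed (simp add: partial_iso_converse)

text \<open>Both graphs play symmetric roles, so it suffices to establish the "forth" half of
  Duplicator's answer for every ordered pair of graphs.\<close>
lemma duplicator_wins_SucI:
  assumes "partial_iso G H P"
    and "\<forall>v\<in>verts G. \<exists>w\<in>verts H. duplicator_wins m G H (insert (v,w) P)"
    and "\<forall>w\<in>verts H. \<exists>v\<in>verts G. duplicator_wins m H G (insert (w,v) (P\<inverse>))"
  shows "duplicator_wins (Suc m) G H P"
  using assms by (simp add: duplicator_wins_converse flip: converse_insert_pair)

definition isolated :: "graph \<Rightarrow> nat \<Rightarrow> bool" where
  "isolated G u \<longleftrightarrow> (\<forall>z\<in>verts G. \<not> adj G u z)"

definition dominating :: "graph \<Rightarrow> nat \<Rightarrow> bool" where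
  "dominating G u \<longleftrightarrow> (\<forall>z\<in>verts G. z = u \<or> adj G u z)"

lemma extend_same_type:
  assumes G: "wf_graph G" and H: "wf_graph H" and u: "u \<in> verts G" "u' \<in> verts H"
    and same: "isolated G u \<longleftrightarrow> isolated H u'" "dominating G u \<longleftrightarrow> dominating H u'"
    and v: "v \<in> verts G"
  shows "\<exists>w\<in>verts H. duplicator_wins 0 G H {(v,w), (u,u')}"
proof -
  have "\<exists>w\<in>verts H. (v = u \<longleftrightarrow> w = u') \<and> (adj G v u \<longleftrightarrow> adj H w u')"
  proof (cases "v = u")
    case True
    then show ?thesis using u wf_graph_irrefl[OF G] wf_graph_irrefl[OF H] by blast
  next
    case False
    show ?thesis
    proof (cases "adj G u v")
      case True
      then obtain w where "w \<in> verts H" "adj H u' w"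
        using same v unfolding isolated_def by blast
      then show ?thesis using True False G H by (metis wf_graph_irrefl wf_graph_sym)
    next
      case nonadj: False
      then obtain w where "w \<in> verts H" "w \<noteq> u'" "\<not> adj H u' w"
        using same v False unfolding dominating_def by blast
      then show ?thesis using nonadj False G H by (metis wf_graph_sym)
    qed
  qed
  then obtain w where "w \<in> verts H" "(v = u \<longleftrightarrow> w = u') \<and> (adj G v u \<longleftrightarrow> adj H w u')" by blast
  then show ?thesis
    using G H u v by (auto intro!: bexI[of _ w] partial_iso_insert partial_iso_singleton)
qed

lemma duplicator_wins_1_same_type:
  assumes "wf_graph G" "wf_graph H" "u \<in> verts G" "u' \<in> verts H"
    "isolated G u \<longleftrightarrow> isolated H u'" "dominating G u \<longleftrightarrow> dominating H u'"
  shows "duplicator_wins 1 G H {(u,u')}"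
  unfolding One_nat_def
  by (rule duplicator_wins_SucI)
    (use assms extend_same_type[of G H u u'] extend_same_type[of H G u' u] partial_iso_singleton
      in auto)

lemma duplicator_wins_2_types_realised:
  assumes G: "wf_graph G" and H: "wf_graph H"
    and "\<And>v. v \<in> verts G \<Longrightarrow>
      \<exists>w\<in>verts H. (isolated G v \<longleftrightarrow> isolated H w) \<and> (dominating G v \<longleftrightarrow> dominating H w)"
    and "\<And>w. w \<in> verts H \<Longrightarrow>
      \<exists>v\<in>verts G. (isolated G v \<longleftrightarrow> isolated H w) \<and> (dominating G v \<longleftrightarrow> dominating H w)"
  shows "duplicator_wins 2 G H {}"
  unfolding numeral_2_eq_2
proof (rule duplicator_wins_SucI)
  show "\<forall>v\<in>verts G. \<exists>w\<in>verts H. duplicator_wins (Suc 0) G H (insert (v,w) {})"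
    using assms(3) duplicator_wins_1_same_type[OF G H, unfolded One_nat_def] by blast
  show "\<forall>w\<in>verts H. \<exists>v\<in>verts G. duplicator_wins (Suc 0) H G (insert (w,v) ({}\<inverse>))"
    using assms(4) duplicator_wins_1_same_type[OF H G, unfolded One_nat_def]
    by (simp only: converse_empty) blast
qed (rule partial_iso_empty)

lemma pebble_extendable_1:
  assumes "wf_graph G" "wf_graph H" "verts G \<noteq> {}" "verts H \<noteq> {}"
  shows "pebble_extendable 1 G H"
  unfolding pebble_extendable_def
proof (intro allI impI)
  fix P assume "partial_iso G H P \<and> finite P \<and> card P < 1"
  then have "P = {}" by (auto simp: card_eq_0_iff)
  then show "(\<forall>v\<in>verts G. \<exists>w\<in>verts H. partial_iso G H (insert (v, w) P))
     \<and> (\<forall>w\<in>verts H. \<exists>v\<in>verts G. partial_iso G H (insert (v, w) P))"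
    using assms partial_iso_singleton[OF assms(1,2)] by blast
qed

lemma pebble_extendable_2:
  assumes G: "wf_graph G" and H: "wf_graph H" and ne: "verts G \<noteq> {}" "verts H \<noteq> {}"
    and types: "\<And>u. u \<in> verts G \<Longrightarrow> \<not> isolated G u \<and> \<not> dominating G u"
      "\<And>u. u \<in> verts H \<Longrightarrow> \<not> isolated H u \<and> \<not> dominating H u"
  shows "pebble_extendable 2 G H"
  unfolding pebble_extendable_def
proof (intro allI impI)
  fix P assume P: "partial_iso G H P \<and> finite P \<and> card P < 2"
  then consider "P = {}" | u u' where "P = {(u,u')}" "u \<in> verts G" "u' \<in> verts H"
    unfolding partial_iso_def
    by (metis One_nat_def card_1_singletonE card_0_eq insert_subset less_2_cases mem_Sigma_iff surj_pair)
  then show "(\<forall>v\<in>verts G. \<exists>w\<in>verts H. partial_iso G H (insert (v, w) P))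
     \<and> (\<forall>w\<in>verts H. \<exists>v\<in>verts G. partial_iso G H (insert (v, w) P))"
  proof cases
    case 1
    then show ?thesis using pebble_extendable_1[OF G H ne] P unfolding pebble_extendable_def by simp
  next
    case 2
    have "\<exists>w\<in>verts H. partial_iso G H {(v,w), (u,u')}" if "v \<in> verts G" for v
      using extend_same_type[OF G H 2(2,3) _ _ that] types 2(2,3) by simp
    moreover have "\<exists>v\<in>verts G. partial_iso G H {(v,w), (u,u')}" if w: "w \<in> verts H" for w
    proof -
      obtain v where "v \<in> verts G" "partial_iso H G {(w,v), (u',u)}"
        using extend_same_type[OF H G 2(3,2) _ _ w] types 2(2,3) by auto
      then show ?thesis using partial_iso_converse[of G H "{(w,v), (u',u)}"] by auto
    qed
    ultimately show ?thesis using 2(1) by simp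
  qed
qed

section \<open>Rich graphs\<close>

definition common_neighbour :: "graph \<Rightarrow> nat \<Rightarrow> nat \<Rightarrow> bool" where
  "common_neighbour G u v \<longleftrightarrow> (\<exists>z\<in>verts G. adj G z u \<and> adj G z v)"

text \<open>A triangle-free graph in which every extension of a pair of vertices that Duplicator may
  need in the three-round game exists; the type of a pair records equality, adjacency and
  having a common neighbour.\<close>
definition rich :: "graph \<Rightarrow> bool" where
  "rich G \<longleftrightarrow> (\<forall>u\<in>verts G. \<forall>z\<in>verts G. adj G u z \<longrightarrow> \<not> common_neighbour G u z)
    \<and> (\<forall>u\<in>verts G. (\<exists>z\<in>verts G. adj G u z)
        \<and> (\<exists>z\<in>verts G. z \<noteq> u \<and> \<not> adj G u z \<and> common_neighbour G u z)
        \<and> (\<exists>z\<in>verts G. z \<noteq> u \<and> \<not> adj G u z \<and> \<not> common_neighbour G u z))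
    \<and> (\<forall>u\<in>verts G. \<forall>v\<in>verts G. u \<noteq> v \<longrightarrow>
        (\<exists>z\<in>verts G. z \<noteq> v \<and> adj G z u \<and> \<not> adj G z v)
        \<and> (\<exists>z\<in>verts G. z \<noteq> u \<and> z \<noteq> v \<and> \<not> adj G z u \<and> \<not> adj G z v))"

lemma rich_not_isolated_dominating:
  "rich G \<Longrightarrow> u \<in> verts G \<Longrightarrow> \<not> isolated G u \<and> \<not> dominating G u"
  unfolding rich_def isolated_def dominating_def by blast

lemma rich_extend_distinct_pair:
  assumes G: "wf_graph G" and H: "wf_graph H" and rH: "rich H"
    and uv: "u \<in> verts G" "v \<in> verts G" "u' \<in> verts H" "v' \<in> verts H" "u \<noteq> v" "u' \<noteq> v'"
    and same: "adj G u v \<longleftrightarrow> adj H u' v'" "common_neighbour G u v \<longleftrightarrow> common_neighbour H u' v'"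
    and z: "z \<in> verts G" "z \<noteq> u" "z \<noteq> v"
  shows "\<exists>z'\<in>verts H. z' \<noteq> u' \<and> z' \<noteq> v' \<and> (adj G z u \<longleftrightarrow> adj H z' u') \<and> (adj G z v \<longleftrightarrow> adj H z' v')"
proof -
  have ext: "(\<exists>z\<in>verts H. z \<noteq> b \<and> adj H z a \<and> \<not> adj H z b)
      \<and> (\<exists>z\<in>verts H. z \<noteq> a \<and> z \<noteq> b \<and> \<not> adj H z a \<and> \<not> adj H z b)"
    if "a \<in> verts H" "b \<in> verts H" "a \<noteq> b" for a b
    using rH that unfolding rich_def by blast
  note irr = wf_graph_irrefl[OF G] wf_graph_irrefl[OF H]
  consider "adj G z u" "adj G z v" | "adj G z u" "\<not> adj G z v" | "\<not> adj G z u" "adj G z v"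
    | "\<not> adj G z u" "\<not> adj G z v" by blast
  then show ?thesis
  proof cases
    case 1
    then have "common_neighbour H u' v'" using z same unfolding common_neighbour_def by blast
    then obtain z' where "z' \<in> verts H" "adj H z' u'" "adj H z' v'" unfolding common_neighbour_def by blast
    then show ?thesis using 1 irr by metis
  next
    case 2
    then show ?thesis using ext[OF uv(3,4,6)] irr by metis
  next
    case 3
    then show ?thesis using ext[OF uv(4,3)] uv(6) irr by metis
  next
    case 4
    then show ?thesis using ext[OF uv(3,4,6)] by metis
  qed
qed

lemma duplicator_wins_1_rich_pair:
  assumes G: "wf_graph G" and H: "wf_graph H" and rG: "rich G" and rH: "rich H"
    and uv: "u \<in> verts G" "v \<in> verts G" "u' \<in> verts H" "v' \<in> verts H"
    and same: "u = v \<longleftrightarrow> u' = v'" "adj G u v \<longleftrightarrow> adj H u' v'"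
      "common_neighbour G u v \<longleftrightarrow> common_neighbour H u' v'"
  shows "duplicator_wins 1 G H {(v,v'), (u,u')}"
proof (cases "u = v")
  case True
  then show ?thesis using same(1) duplicator_wins_1_same_type[OF G H uv(1,3)]
    rich_not_isolated_dominating[OF rG uv(1)] rich_not_isolated_dominating[OF rH uv(3)] by simp
next
  case False
  have forth: "\<forall>z\<in>verts G. \<exists>z'\<in>verts H. duplicator_wins 0 G H {(z,z'), (v,v'), (u,u')}"
    if "wf_graph G" "wf_graph H" "rich H" "u \<in> verts G" "v \<in> verts G" "u' \<in> verts H" "v' \<in> verts H"
      "u \<noteq> v" "u' \<noteq> v'" "adj G u v \<longleftrightarrow> adj H u' v'"
      "common_neighbour G u v \<longleftrightarrow> common_neighbour H u' v'"
    for G H u v u' v'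
  proof
    fix z assume z: "z \<in> verts G"
    have pair: "partial_iso G H {(v,v'), (u,u')}"
      using that by (intro partial_iso_insert partial_iso_singleton) (auto simp: wf_graph_sym)
    have "\<exists>z'\<in>verts H. (z = v \<longleftrightarrow> z' = v') \<and> (z = u \<longleftrightarrow> z' = u')
        \<and> (adj G z v \<longleftrightarrow> adj H z' v') \<and> (adj G z u \<longleftrightarrow> adj H z' u')"
    proof (cases "z = u \<or> z = v")
      case True
      then show ?thesis using that wf_graph_sym wf_graph_irrefl by metis
    next
      case False
      then show ?thesis using rich_extend_distinct_pair[OF that(1-3,4-11) z] by blast
    qed
    then show "\<exists>z'\<in>verts H. duplicator_wins 0 G H {(z,z'), (v,v'), (u,u')}"
      using that z pair by (auto intro!: partial_iso_insert)
  qed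
  have "partial_iso G H {(v,v'), (u,u')}"
    using G H uv same by (intro partial_iso_insert partial_iso_singleton) (auto simp: wf_graph_sym)
  moreover have "\<forall>z'\<in>verts H. \<exists>z\<in>verts G. duplicator_wins 0 H G {(z',z), (v',v), (u',u)}"
    using forth[OF H G rG uv(3,4,1,2)] False same by auto
  ultimately show ?thesis
    unfolding One_nat_def using forth[OF G H rH uv] False same
    by (intro duplicator_wins_SucI) auto
qed

lemma rich_match_pair_type:
  assumes G: "wf_graph G" and H: "wf_graph H" and rG: "rich G" and rH: "rich H"
    and u: "u \<in> verts G" "u' \<in> verts H" and v: "v \<in> verts G"
  shows "\<exists>v'\<in>verts H. (u = v \<longleftrightarrow> u' = v') \<and> (adj G u v \<longleftrightarrow> adj H u' v')
    \<and> (common_neighbour G u v \<longleftrightarrow> common_neighbour H u' v')"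
proof -
  have types: "(\<exists>z\<in>verts H. adj H u' z) \<and> (\<forall>z\<in>verts H. adj H u' z \<longrightarrow> \<not> common_neighbour H u' z)
      \<and> (\<exists>z\<in>verts H. z \<noteq> u' \<and> \<not> adj H u' z \<and> common_neighbour H u' z)
      \<and> (\<exists>z\<in>verts H. z \<noteq> u' \<and> \<not> adj H u' z \<and> \<not> common_neighbour H u' z)"
    using rH u unfolding rich_def by blast
  have triangle_free: "adj G u v \<Longrightarrow> \<not> common_neighbour G u v" using rG u v unfolding rich_def by blast
  show ?thesis
  proof (cases "u = v")
    case True
    have "common_neighbour G u u"
      using rG u wf_graph_sym[OF G] unfolding rich_def common_neighbour_def by blast
    moreover have "common_neighbour H u' u'"
      using types wf_graph_sym[OF H] unfolding common_neighbour_def by blast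
    ultimately show ?thesis using True u wf_graph_irrefl[OF G] wf_graph_irrefl[OF H] by blast
  next
    case False
    then show ?thesis using types triangle_free wf_graph_irrefl[OF H] by metis
  qed
qed

lemma duplicator_wins_3_rich:
  assumes G: "wf_graph G" and H: "wf_graph H" and rG: "rich G" and rH: "rich H"
    and ne: "verts G \<noteq> {}" "verts H \<noteq> {}"
  shows "duplicator_wins 3 G H {}"
proof -
  have forth: "\<forall>v\<in>verts G. \<exists>v'\<in>verts H. duplicator_wins 1 G H {(v,v'), (u,u')}"
    if "wf_graph G" "wf_graph H" "rich G" "rich H" "u \<in> verts G" "u' \<in> verts H" for G H u u'
    using that rich_match_pair_type[OF that] duplicator_wins_1_rich_pair[OF that(1-4)] by metis
  have pair: "duplicator_wins 2 G H {(u,u')}"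
    if G: "wf_graph G" and H: "wf_graph H" and rG: "rich G" and rH: "rich H"
      and u: "u \<in> verts G" "u' \<in> verts H" for G H u u'
    unfolding numeral_2_eq_2
  proof (rule duplicator_wins_SucI)
    show "partial_iso G H {(u, u')}" using partial_iso_singleton[OF G H u] .
    show "\<forall>v\<in>verts G. \<exists>v'\<in>verts H. duplicator_wins (Suc 0) G H (insert (v,v') {(u,u')})"
      using forth[OF G H rG rH u] by simp
    show "\<forall>v'\<in>verts H. \<exists>v\<in>verts G. duplicator_wins (Suc 0) H G (insert (v',v) ({(u,u')}\<inverse>))"
      using forth[OF H G rH rG u(2,1)] by simp
  qed
  show ?thesis
    unfolding numeral_3_eq_3
  proof (rule duplicator_wins_SucI)
    show "\<forall>v\<in>verts G. \<exists>w\<in>verts H. duplicator_wins (Suc (Suc 0)) G H (insert (v,w) {})"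
      using pair[OF G H rG rH, unfolded numeral_2_eq_2] ne(2) by blast
    show "\<forall>w\<in>verts H. \<exists>v\<in>verts G. duplicator_wins (Suc (Suc 0)) H G (insert (w,v) ({}\<inverse>))"
      using pair[OF H G rH rG, unfolded numeral_2_eq_2] ne(1) by (simp del: duplicator_wins.simps) blast
  qed (rule partial_iso_empty)
qed

definition bipartite_by :: "graph \<Rightarrow> nat set \<Rightarrow> bool" where
  "bipartite_by G X \<longleftrightarrow> (\<forall>u w. adj G u w \<longrightarrow> (u \<in> X \<longleftrightarrow> w \<notin> X))"

lemma rich_if_bipartite:
  assumes G: "wf_graph G" and B: "bipartite_by G X"
    and degree: "\<And>u v. u \<in> verts G \<Longrightarrow> \<exists>z\<in>verts G. adj G u z \<and> z \<noteq> v"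
    and same_side_common: "\<And>u. u \<in> verts G \<Longrightarrow>
      \<exists>z\<in>verts G. z \<noteq> u \<and> (z \<in> X \<longleftrightarrow> u \<in> X) \<and> common_neighbour G u z"
    and other_side_non_adj: "\<And>u. u \<in> verts G \<Longrightarrow> \<exists>z\<in>verts G. (z \<in> X \<longleftrightarrow> u \<notin> X) \<and> \<not> adj G u z"
    and separate: "\<And>u v. u \<in> verts G \<Longrightarrow> v \<in> verts G \<Longrightarrow> u \<noteq> v \<Longrightarrow> (u \<in> X \<longleftrightarrow> v \<in> X) \<Longrightarrow>
      \<exists>z\<in>verts G. adj G z u \<and> \<not> adj G z v"
    and third: "\<And>u v. u \<in> verts G \<Longrightarrow> v \<in> verts G \<Longrightarrow> u \<noteq> v \<Longrightarrow> (u \<in> X \<longleftrightarrow> v \<in> X) \<Longrightarrow>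
      \<exists>z\<in>verts G. z \<noteq> u \<and> z \<noteq> v \<and> (z \<in> X \<longleftrightarrow> u \<in> X)"
    and avoid_across: "\<And>u v. u \<in> verts G \<Longrightarrow> v \<in> verts G \<Longrightarrow> (u \<in> X \<longleftrightarrow> v \<notin> X) \<Longrightarrow>
      \<exists>z\<in>verts G. z \<noteq> u \<and> (z \<in> X \<longleftrightarrow> u \<in> X) \<and> \<not> adj G z v"
  shows "rich G"
proof -
  have across: "adj G u w \<Longrightarrow> (u \<in> X \<longleftrightarrow> w \<notin> X)" for u w
    using B unfolding bipartite_by_def by blast
  have no_common: "(u \<in> X \<longleftrightarrow> v \<notin> X) \<Longrightarrow> \<not> common_neighbour G u v" for u v
    using across unfolding common_neighbour_def by blast
  have same_side_non_adj: "(u \<in> X \<longleftrightarrow> v \<in> X) \<Longrightarrow> \<not> adj G u v" for u v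
    using across by blast
  have single: "\<exists>z\<in>verts G. z \<noteq> u \<and> \<not> adj G u z \<and> common_neighbour G u z"
    "\<exists>z\<in>verts G. z \<noteq> u \<and> \<not> adj G u z \<and> \<not> common_neighbour G u z" if u: "u \<in> verts G" for u
  proof -
    obtain z where "z \<in> verts G" "z \<noteq> u" "z \<in> X \<longleftrightarrow> u \<in> X" "common_neighbour G u z"
      using same_side_common[OF u] by blast
    then show "\<exists>z\<in>verts G. z \<noteq> u \<and> \<not> adj G u z \<and> common_neighbour G u z"
      using same_side_non_adj by auto
    obtain y where "y \<in> verts G" "y \<in> X \<longleftrightarrow> u \<notin> X" "\<not> adj G u y"
      using other_side_non_adj[OF u] by blast
    moreover from this(2) have "y \<noteq> u" "\<not> common_neighbour G u y" using no_common by auto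
    ultimately show "\<exists>z\<in>verts G. z \<noteq> u \<and> \<not> adj G u z \<and> \<not> common_neighbour G u z" by blast
  qed
  have pair: "(\<exists>z\<in>verts G. z \<noteq> v \<and> adj G z u \<and> \<not> adj G z v)
    \<and> (\<exists>z\<in>verts G. z \<noteq> u \<and> z \<noteq> v \<and> \<not> adj G z u \<and> \<not> adj G z v)"
    if u: "u \<in> verts G" and v: "v \<in> verts G" and uv: "u \<noteq> v" for u v
  proof (cases "u \<in> X \<longleftrightarrow> v \<in> X")
    case True
    obtain z where z: "z \<in> verts G" "adj G z u" "\<not> adj G z v"
      using separate[OF u v uv True] by blast
    moreover have "z \<noteq> v" using across[OF z(2)] True by auto
    moreover obtain y where "y \<in> verts G" "y \<noteq> u" "y \<noteq> v" "y \<in> X \<longleftrightarrow> u \<in> X"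
      using third[OF u v uv True] by blast
    moreover have "\<not> adj G y u" "\<not> adj G y v" if "y \<in> X \<longleftrightarrow> u \<in> X" for y
      using that True same_side_non_adj by auto
    ultimately show ?thesis by auto
  next
    case False
    obtain z where z: "z \<in> verts G" "adj G u z" "z \<noteq> v" using degree[OF u] by blast
    moreover have "\<not> adj G z v" using across[OF z(2)] False same_side_non_adj by auto
    moreover obtain y where y: "y \<in> verts G" "y \<noteq> u" "y \<in> X \<longleftrightarrow> u \<in> X" "\<not> adj G y v"
      using avoid_across[OF u v] False by blast
    moreover have "y \<noteq> v" "\<not> adj G y u" using y(3) False same_side_non_adj by auto
    ultimately show ?thesis using wf_graph_sym[OF G] by auto
  qed
  have "\<exists>z\<in>verts G. adj G u z" if "u \<in> verts G" for u
    using degree[OF that] by blast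
  moreover have "\<not> common_neighbour G u z" if "adj G u z" for u z
    using no_common across[OF that] by auto
  ultimately show ?thesis
    unfolding rich_def using single pair by (intro conjI ballI impI) simp_all
qed

lemma edge_rel_iff: "(u,w) \<in> edge_rel G \<longleftrightarrow> u \<in> verts G \<and> w \<in> verts G \<and> adj G u w"
  by (simp add: edge_rel_def)

lemma reachable_sym: "wf_graph G \<Longrightarrow> (x,y) \<in> (edge_rel G)\<^sup>* \<Longrightarrow> (y,x) \<in> (edge_rel G)\<^sup>*"
proof -
  assume G: "wf_graph G" and xy: "(x,y) \<in> (edge_rel G)\<^sup>*"
  have "(edge_rel G)\<inverse> = edge_rel G"
    using wf_graph_sym[OF G] unfolding edge_rel_def by auto
  then show ?thesis using rtrancl_converseI[OF xy] by simp
qed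

lemma connected_if_all_reach:
  assumes G: "wf_graph G" and h: "h \<in> verts G" and reach: "\<And>x. x \<in> verts G \<Longrightarrow> (x,h) \<in> (edge_rel G)\<^sup>*"
  shows "connected G"
  unfolding connected_def
proof (intro conjI ballI)
  fix u w assume "u \<in> verts G" "w \<in> verts G"
  then show "(u, w) \<in> (edge_rel G)\<^sup>*"
    using rtrancl_trans[OF reach reachable_sym[OF G reach]] by blast
qed (use h in blast)

lemma verts_del_verts [simp]: "verts (del_verts G S) = verts G - S"
  and adj_del_verts [simp]: "adj (del_verts G S) u w \<longleftrightarrow> adj G u w \<and> u \<notin> S \<and> w \<notin> S"
  by (simp_all add: del_verts_def verts_def adj_def)

lemma del_verts_empty [simp]: "del_verts G {} = G"
  by (simp add: del_verts_def verts_def adj_def)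

lemma wf_graph_del_verts: "wf_graph G \<Longrightarrow> wf_graph (del_verts G S)"
  unfolding wf_graph_def by auto

lemma k_connectedI:
  assumes G: "wf_graph G" and k: "k \<ge> 1" and card: "card (verts G) > k"
    and del: "\<And>S. S \<subseteq> verts G \<Longrightarrow> card S < k \<Longrightarrow> connected (del_verts G S)"
  shows "k_connected k G"
  unfolding k_connected_def using del[of "{}"] k card del by auto

lemma k_connected_le_kappa: "k_connected k G \<Longrightarrow> k \<le> kappa G"
  unfolding kappa_def
  by (rule Greatest_le_nat[where b = "card (verts G)"]) (auto simp: k_connected_def)

section \<open>Paths on four vertices\<close>

lemma P4_simps: "verts P4 = {0,1,2,3}"
  "adj P4 u w \<longleftrightarrow> (u,w) \<in> {(0,1),(1,0),(1,2),(2,1),(2,3),(3,2)}"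
  by (simp_all add: P4_def verts_def adj_def)

lemma contains_P4E:
  assumes "contains_subgraph G P4"
  obtains a b c d where "a \<in> verts G" "b \<in> verts G" "c \<in> verts G" "d \<in> verts G"
    "a \<noteq> b" "a \<noteq> c" "a \<noteq> d" "b \<noteq> c" "b \<noteq> d" "c \<noteq> d" "adj G a b" "adj G b c" "adj G c d"
proof -
  from assms obtain f where f: "inj_on f (verts P4)" "f ` verts P4 \<subseteq> verts G"
    "\<forall>u\<in>verts P4. \<forall>w\<in>verts P4. adj P4 u w \<longrightarrow> adj G (f u) (f w)"
    unfolding contains_subgraph_def by blast
  have V: "(0::nat) \<in> verts P4" "(1::nat) \<in> verts P4" "(2::nat) \<in> verts P4" "(3::nat) \<in> verts P4"
    by (simp_all add: P4_simps)
  have "adj P4 0 1" "adj P4 1 2" "adj P4 2 3" by (simp_all add: P4_simps)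
  then have adj: "adj G (f 0) (f 1)" "adj G (f 1) (f 2)" "adj G (f 2) (f 3)"
    using f(3) V by blast+
  have "distinct (map f [0,1,2,3])" using f(1) by (simp add: distinct_map P4_simps)
  then have ne: "f 0 \<noteq> f 1" "f 0 \<noteq> f 2" "f 0 \<noteq> f 3" "f 1 \<noteq> f 2" "f 1 \<noteq> f 3" "f 2 \<noteq> f 3"
    by auto
  have "f 0 \<in> verts G" "f 1 \<in> verts G" "f 2 \<in> verts G" "f 3 \<in> verts G" using f(2) V by blast+
  from that[OF this ne adj] show thesis .
qed

lemma contains_P4I:
  assumes G: "wf_graph G" and "a \<in> verts G" "b \<in> verts G" "c \<in> verts G" "d \<in> verts G"
    "a \<noteq> b" "a \<noteq> c" "a \<noteq> d" "b \<noteq> c" "b \<noteq> d" "c \<noteq> d" "adj G a b" "adj G b c" "adj G c d"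
  shows "contains_subgraph G P4"
  unfolding contains_subgraph_def P4_simps
proof (intro exI[of _ "\<lambda>i::nat. if i = 0 then a else if i = 1 then b else if i = 2 then c else d"] conjI)
  show "inj_on (\<lambda>i::nat. if i = 0 then a else if i = 1 then b else if i = 2 then c else d) {0, 1, 2, 3}"
    using assms unfolding inj_on_def by auto
  show "(\<lambda>i::nat. if i = 0 then a else if i = 1 then b else if i = 2 then c else d) ` {0, 1, 2, 3}
      \<subseteq> verts G"
    using assms by auto
  have "adj G b a" "adj G c b" "adj G d c" using assms wf_graph_sym[OF G] by blast+
  then show "\<forall>u::nat\<in>{0, 1, 2, 3}. \<forall>w::nat\<in>{0, 1, 2, 3}.
      (u, w) \<in> {(0, 1), (1, 0), (1, 2), (2, 1), (2, 3), (3, 2)} \<longrightarrow>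
      adj G (if u = 0 then a else if u = 1 then b else if u = 2 then c else d)
        (if w = 0 then a else if w = 1 then b else if w = 2 then c else d)"
    using assms by simp
qed

text \<open>The subformula quantifying variable 1 (resp. 0) says that variable 0 (resp. 1) is
  dominating; reusing the variables keeps the width at two.\<close>
definition P4_sentence :: fo where
  "P4_sentence = Neg (All 0 (All 1 (Impl (Adj 0 1)
     (Iff (All 1 (Disj (Eq 1 0) (Adj 0 1))) (Neg (All 0 (Disj (Eq 0 1) (Adj 1 0))))))))"

lemma sat_P4_sentence:
  "sat G a P4_sentence \<longleftrightarrow> (\<exists>x\<in>verts G. \<exists>y\<in>verts G. adj G x y \<and> (dominating G x \<longleftrightarrow> dominating G y))"
  unfolding P4_sentence_def dominating_def by auto

lemma P4_sentence_sentence: "sentence P4_sentence"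
  and qdepth_P4_sentence: "qdepth P4_sentence = 3"
  and width_P4_sentence: "width P4_sentence = 2"
proof -
  have "vars P4_sentence = {0,1}" by (auto simp: P4_sentence_def)
  then show "sentence P4_sentence" "qdepth P4_sentence = 3" "width P4_sentence = 2"
    unfolding sentence_def width_def by (auto simp: P4_sentence_def)
qed

lemma P4_imp_adjacent_same_dominance:
  assumes G: "wf_graph G" and P4: "contains_subgraph G P4"
  shows "\<exists>x\<in>verts G. \<exists>y\<in>verts G. adj G x y \<and> (dominating G x \<longleftrightarrow> dominating G y)"
proof (rule ccontr)
  assume none: "\<not> ?thesis"
  obtain a b c d where p: "a \<in> verts G" "b \<in> verts G" "c \<in> verts G" "d \<in> verts G"
    "adj G a b" "adj G b c" "adj G c d" "b \<noteq> d" "c \<noteq> a"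
    using P4 by (rule contains_P4E) blast
  have differ: "dominating G x \<longleftrightarrow> \<not> dominating G y" if "x \<in> verts G" "y \<in> verts G" "adj G x y" for x y
    using none that by auto
  note alternate = differ[OF p(1,2,5)] differ[OF p(2,3,6)] differ[OF p(3,4,7)]
  show False
  proof (cases "dominating G b")
    case True
    then have "adj G b d" using p unfolding dominating_def by auto
    then show False using differ[OF p(2,4)] alternate True by simp
  next
    case False
    then have "adj G c a" using alternate p unfolding dominating_def by auto
    then show False using differ[OF p(3,1)] alternate False by simp
  qed
qed

lemma ex_notin_if_card_less: "finite B \<Longrightarrow> card B < card A \<Longrightarrow> \<exists>a\<in>A. a \<notin> B"
  by (meson card_mono not_le subsetI)

lemma card_enum_le: "card {a, b} \<le> 2" "card {a, b, c} \<le> 3" "card {a, b, c, d} \<le> 4"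
  using card_length[of "[a, b]"] card_length[of "[a, b, c]"] card_length[of "[a, b, c, d]"] by simp_all

lemma dominating_edge_imp_P4:
  assumes G: "wf_graph G" and n: "card (verts G) \<ge> 4"
    and xy: "x \<in> verts G" "y \<in> verts G" "adj G x y" "dominating G x" "dominating G y"
  shows "contains_subgraph G P4"
proof -
  have "x \<noteq> y" using xy wf_graph_irrefl[OF G] by blast
  obtain e where e: "e \<in> verts G" "e \<notin> {x, y}"
    using ex_notin_if_card_less[of "{x, y}" "verts G"] card_enum_le(2)[of x x y] n by auto
  obtain f where f: "f \<in> verts G" "f \<notin> {x, y, e}"
    using ex_notin_if_card_less[of "{x, y, e}" "verts G"] card_enum_le(2)[of x y e] n by auto
  have "adj G e x" "adj G x f" "adj G f y"
    using xy e f wf_graph_sym[OF G] unfolding dominating_def by auto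
  then show ?thesis
    using e f xy \<open>x \<noteq> y\<close> by (intro contains_P4I[OF G, of e x f y]) auto
qed

lemma reachable_leaves_set:
  assumes "(z,x) \<in> R\<^sup>*" "z \<notin> A" "x \<in> A"
  shows "\<exists>t s. (t,s) \<in> R \<and> t \<notin> A \<and> s \<in> A"
  using assms by (induction rule: rtrancl_induct) auto

lemma non_dominating_edge_imp_P4:
  assumes G: "wf_graph G" and C: "connected G"
    and xy: "x \<in> verts G" "y \<in> verts G" "adj G x y" "\<not> dominating G x" "\<not> dominating G y"
  shows "contains_subgraph G P4"
proof -
  have "x \<noteq> y" using xy wf_graph_irrefl[OF G] by blast
  define A where "A = {x, y} \<union> {z. adj G x z \<or> adj G y z}"
  show ?thesis
  proof (cases "verts G \<subseteq> A")
    case True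
    obtain u where u: "u \<in> verts G" "u \<noteq> x" "\<not> adj G x u" using xy(4) unfolding dominating_def by blast
    obtain w where w: "w \<in> verts G" "w \<noteq> y" "\<not> adj G y w" using xy(5) unfolding dominating_def by blast
    have "u \<noteq> y" "w \<noteq> x" using u w xy wf_graph_sym[OF G] by auto
    then have "adj G y u" "adj G x w" using True u w unfolding A_def by auto
    then have "u \<noteq> w" using u by blast
    then show ?thesis using contains_P4I[OF G, of u y x w] \<open>adj G y u\<close> \<open>adj G x w\<close> xy u w
        \<open>u \<noteq> y\<close> \<open>w \<noteq> x\<close> \<open>x \<noteq> y\<close> wf_graph_sym[OF G] by metis
  next
    case False
    then obtain z where z: "z \<in> verts G" "z \<notin> A" by blast
    have "(z,x) \<in> (edge_rel G)\<^sup>*" using C z xy unfolding connected_def by blast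
    moreover have "x \<in> A" unfolding A_def by blast
    ultimately obtain t s where ts: "(t,s) \<in> edge_rel G" "t \<notin> A" "s \<in> A"
      using reachable_leaves_set z by metis
    then have tsv: "t \<in> verts G" "s \<in> verts G" "adj G t s" by (auto simp: edge_rel_iff)
    have t: "t \<noteq> x" "t \<noteq> y" "\<not> adj G x t" "\<not> adj G y t" using ts unfolding A_def by auto
    have s: "s \<noteq> x" "s \<noteq> y" using tsv t wf_graph_sym[OF G] by auto
    have "t \<noteq> s" using tsv wf_graph_irrefl[OF G] by blast
    moreover have "adj G x s \<or> adj G y s" using ts s unfolding A_def by auto
    ultimately show ?thesis
      using contains_P4I[OF G, of t s x y] contains_P4I[OF G, of t s y x]
        tsv t s xy \<open>x \<noteq> y\<close> wf_graph_sym[OF G] by metis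
  qed
qed

lemma contains_P4_iff_adjacent_same_dominance:
  assumes "wf_graph G" "connected G" "card (verts G) \<ge> 4"
  shows "contains_subgraph G P4 \<longleftrightarrow>
    (\<exists>x\<in>verts G. \<exists>y\<in>verts G. adj G x y \<and> (dominating G x \<longleftrightarrow> dominating G y))"
  using assms P4_imp_adjacent_same_dominance dominating_edge_imp_P4 non_dominating_edge_imp_P4
  by metis

lemma P4_eventually_defined: "eventually_defines nverts P4 P4_sentence"
  unfolding eventually_defines_def models_def nverts_def
  using P4_sentence_sentence sat_P4_sentence contains_P4_iff_adjacent_same_dominance by metis

definition star :: "nat \<Rightarrow> graph" where
  "star n = ({0..n}, \<lambda>u w. (u = 0 \<and> 1 \<le> w \<and> w \<le> n) \<or> (w = 0 \<and> 1 \<le> u \<and> u \<le> n))"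

definition star_plus_edge :: "nat \<Rightarrow> graph" where
  "star_plus_edge n = ({0..n}, \<lambda>u w. adj (star n) u w \<or> (u = 1 \<and> w = 2) \<or> (u = 2 \<and> w = 1))"

lemma verts_star [simp]: "verts (star n) = {0..n}"
  and adj_star: "adj (star n) u w \<longleftrightarrow> (u = 0 \<and> 1 \<le> w \<and> w \<le> n) \<or> (w = 0 \<and> 1 \<le> u \<and> u \<le> n)"
  by (simp_all add: star_def verts_def adj_def)

lemma verts_star_plus_edge [simp]: "verts (star_plus_edge n) = {0..n}"
  and adj_star_plus_edge:
    "adj (star_plus_edge n) u w \<longleftrightarrow> adj (star n) u w \<or> (u = 1 \<and> w = 2) \<or> (u = 2 \<and> w = 1)"
  by (simp_all add: star_plus_edge_def verts_def adj_def)

lemma star_wf: "wf_graph (star n)"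
  and star_plus_edge_wf: "n \<ge> 2 \<Longrightarrow> wf_graph (star_plus_edge n)"
  unfolding wf_graph_def adj_star_plus_edge adj_star by auto

lemma connected_if_hub:
  assumes G: "wf_graph G" and h: "h \<in> verts G" and hub: "\<And>x. x \<in> verts G \<Longrightarrow> x \<noteq> h \<Longrightarrow> adj G x h"
  shows "connected G"
proof (rule connected_if_all_reach[OF G h])
  fix x assume "x \<in> verts G"
  then show "(x, h) \<in> (edge_rel G)\<^sup>*"
    using h hub by (cases "x = h") (auto intro!: r_into_rtrancl simp: edge_rel_iff)
qed

lemma star_connected: "connected (star n)"
  by (rule connected_if_hub[OF star_wf, of 0]) (auto simp: adj_star)

lemma star_plus_edge_connected: "n \<ge> 2 \<Longrightarrow> connected (star_plus_edge n)"
  by (rule connected_if_hub[OF star_plus_edge_wf, of _ 0]) (auto simp: adj_star_plus_edge adj_star)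

lemma star_no_P4: "\<not> contains_subgraph (star n) P4"
proof
  assume "contains_subgraph (star n) P4"
  then obtain a b c d where "adj (star n) a b" "adj (star n) c d" "a \<noteq> c" "a \<noteq> d" "b \<noteq> c" "b \<noteq> d"
    by (rule contains_P4E) blast
  then show False unfolding adj_star by auto
qed

lemma star_plus_edge_P4: "n \<ge> 3 \<Longrightarrow> contains_subgraph (star_plus_edge n) P4"
  by (rule contains_P4I[of _ 3 0 1 2]) (auto simp: adj_star_plus_edge adj_star star_plus_edge_wf)

lemma star_types:
  assumes "n \<ge> 3" "v \<in> {0..n}"
  shows "\<not> isolated (star n) v" "dominating (star n) v \<longleftrightarrow> v = 0"
    "\<not> isolated (star_plus_edge n) v" "dominating (star_plus_edge n) v \<longleftrightarrow> v = 0"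
proof -
  have "adj (star n) v (if v = 0 then 1 else 0)" using assms by (auto simp: adj_star)
  then show "\<not> isolated (star n) v" "\<not> isolated (star_plus_edge n) v"
    using assms unfolding isolated_def by (auto simp: adj_star_plus_edge intro!: bexI[of _ "if v = 0 then 1 else 0"])
  let ?z = "if v \<le> 2 then 3 else 1 :: nat"
  have "?z \<in> {0..n}" "?z \<noteq> v" "\<not> adj (star_plus_edge n) v ?z" "\<not> adj (star n) v ?z" if "v \<noteq> 0"
    using assms that by (auto simp: adj_star_plus_edge adj_star)
  then have "\<not> dominating (star n) v" "\<not> dominating (star_plus_edge n) v" if "v \<noteq> 0"
    using that unfolding dominating_def verts_star verts_star_plus_edge by blast+
  moreover have "dominating (star n) 0" "dominating (star_plus_edge n) 0"
    by (auto simp: dominating_def adj_star_plus_edge adj_star)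
  ultimately show "dominating (star n) v \<longleftrightarrow> v = 0" "dominating (star_plus_edge n) v \<longleftrightarrow> v = 0"
    by auto
qed

lemma duplicator_wins_2_stars: "n \<ge> 3 \<Longrightarrow> duplicator_wins 2 (star n) (star_plus_edge n) {}"
  by (rule duplicator_wins_2_types_realised[OF star_wf star_plus_edge_wf]) (use star_types in auto)

lemma P4_definer_separates_stars:
  assumes "eventually_defines nverts P4 \<Phi>"
  shows "\<exists>n\<ge>3. models (star n) \<Phi> \<noteq> models (star_plus_edge n) \<Phi>"
proof -
  obtain k where k: "\<And>G. wf_graph G \<Longrightarrow> connected G \<Longrightarrow> nverts G \<ge> k \<Longrightarrow>
      models G \<Phi> \<longleftrightarrow> contains_subgraph G P4"
    using assms unfolding eventually_defines_def by blast
  have "nverts (star (k + 3)) \<ge> k" "nverts (star_plus_edge (k + 3)) \<ge> k"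
    by (simp_all add: nverts_def)
  then have "models (star (k + 3)) \<Phi> \<noteq> models (star_plus_edge (k + 3)) \<Phi>"
    using k star_wf star_plus_edge_wf star_connected star_plus_edge_connected star_no_P4
      star_plus_edge_P4[of "k + 3"] by simp
  then show ?thesis by (intro exI[of _ "k + 3"]) simp
qed

section \<open>Four-cycles\<close>

lemma C4_simps: "verts C4 = {0,1,2,3}"
  "adj C4 u w \<longleftrightarrow> (u,w) \<in> {(0,1),(1,0),(1,2),(2,1),(2,3),(3,2),(3,0),(0,3)}"
  by (simp_all add: C4_def verts_def adj_def)

lemma contains_C4E:
  assumes "contains_subgraph G C4"
  obtains a b c d where "a \<in> verts G" "b \<in> verts G" "c \<in> verts G" "d \<in> verts G"
    "a \<noteq> c" "b \<noteq> d" "adj G a b" "adj G b c" "adj G c d" "adj G d a"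
proof -
  from assms obtain f where f: "inj_on f (verts C4)" "f ` verts C4 \<subseteq> verts G"
    "\<forall>u\<in>verts C4. \<forall>w\<in>verts C4. adj C4 u w \<longrightarrow> adj G (f u) (f w)"
    unfolding contains_subgraph_def by blast
  have V: "(0::nat) \<in> verts C4" "(1::nat) \<in> verts C4" "(2::nat) \<in> verts C4" "(3::nat) \<in> verts C4"
    by (simp_all add: C4_simps)
  have "adj C4 0 1" "adj C4 1 2" "adj C4 2 3" "adj C4 3 0" by (simp_all add: C4_simps)
  then have adj: "adj G (f 0) (f 1)" "adj G (f 1) (f 2)" "adj G (f 2) (f 3)" "adj G (f 3) (f 0)"
    using f(3) V by blast+
  have "distinct (map f [0,1,2,3])" using f(1) by (simp add: distinct_map C4_simps)
  then have ne: "f 0 \<noteq> f 2" "f 1 \<noteq> f 3" by auto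
  have "f 0 \<in> verts G" "f 1 \<in> verts G" "f 2 \<in> verts G" "f 3 \<in> verts G" using f(2) V by blast+
  from that[OF this ne adj] show thesis .
qed

lemma contains_C4I:
  assumes G: "wf_graph G" and "a \<in> verts G" "b \<in> verts G" "c \<in> verts G" "d \<in> verts G"
    "a \<noteq> c" "b \<noteq> d" "adj G a b" "adj G b c" "adj G c d" "adj G d a"
  shows "contains_subgraph G C4"
  unfolding contains_subgraph_def C4_simps
proof (intro exI[of _ "\<lambda>i::nat. if i = 0 then a else if i = 1 then b else if i = 2 then c else d"] conjI)
  have "a \<noteq> b" "b \<noteq> c" "c \<noteq> d" "d \<noteq> a" using assms wf_graph_irrefl[OF G] by metis+
  then show "inj_on (\<lambda>i::nat. if i = 0 then a else if i = 1 then b else if i = 2 then c else d) {0, 1, 2, 3}"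
    using assms unfolding inj_on_def by auto
  show "(\<lambda>i::nat. if i = 0 then a else if i = 1 then b else if i = 2 then c else d) ` {0, 1, 2, 3}
      \<subseteq> verts G"
    using assms by auto
  have "adj G b a" "adj G c b" "adj G d c" "adj G a d" using assms wf_graph_sym[OF G] by blast+
  then show "\<forall>u::nat\<in>{0, 1, 2, 3}. \<forall>w::nat\<in>{0, 1, 2, 3}.
      (u, w) \<in> {(0,1),(1,0),(1,2),(2,1),(2,3),(3,2),(3,0),(0,3)} \<longrightarrow>
      adj G (if u = 0 then a else if u = 1 then b else if u = 2 then c else d)
        (if w = 0 then a else if w = 1 then b else if w = 2 then c else d)"
    using assms by simp
qed

definition C4_sentence :: fo where
  "C4_sentence = Ex 0 (Ex 1 (Ex 2 (Ex 3 (Conj (Adj 0 1) (Conj (Adj 1 2) (Conj (Adj 2 3)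
     (Conj (Adj 3 0) (Conj (Neg (Eq 0 2)) (Neg (Eq 1 3))))))))))"

lemma C4_sentence_sentence: "sentence C4_sentence"
  and qdepth_C4_sentence: "qdepth C4_sentence = 4"
  unfolding sentence_def by (auto simp: C4_sentence_def)

lemma models_C4_sentence: "wf_graph G \<Longrightarrow> models G C4_sentence \<longleftrightarrow> contains_subgraph G C4"
  unfolding models_def C4_sentence_def
  by (auto elim!: contains_C4E intro: contains_C4I)

lemma C4_eventually_defined: "eventually_defines kappa C4 C4_sentence"
  unfolding eventually_defines_def using C4_sentence_sentence models_C4_sentence by blast

section \<open>The complete bipartite graph minus a Hamiltonian cycle\<close>

definition succ_mod :: "nat \<Rightarrow> nat \<Rightarrow> nat" where
  "succ_mod n i = (if Suc i = n then 0 else Suc i)"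

definition pred_mod :: "nat \<Rightarrow> nat \<Rightarrow> nat" where
  "pred_mod n j = (if j = 0 then n - 1 else j - 1)"

lemma succ_mod_less: "i < n \<Longrightarrow> succ_mod n i < n"
  and pred_mod_less: "j < n \<Longrightarrow> pred_mod n j < n"
  and succ_mod_neq: "n \<ge> 2 \<Longrightarrow> i < n \<Longrightarrow> succ_mod n i \<noteq> i"
  and pred_mod_neq: "n \<ge> 2 \<Longrightarrow> j < n \<Longrightarrow> pred_mod n j \<noteq> j"
  and succ_mod_succ_mod_neq: "n \<ge> 3 \<Longrightarrow> i < n \<Longrightarrow> succ_mod n (succ_mod n i) \<noteq> i"
  and pred_mod_pred_mod_neq: "n \<ge> 3 \<Longrightarrow> j < n \<Longrightarrow> pred_mod n (pred_mod n j) \<noteq> j"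
  and succ_mod_eq_iff: "i < n \<Longrightarrow> j < n \<Longrightarrow> j = succ_mod n i \<longleftrightarrow> i = pred_mod n j"
  unfolding succ_mod_def pred_mod_def by auto

text \<open>Vertex i < n is joined to n + j unless j = i or j = i + 1 (mod n): the complete
  bipartite graph K(n,n) with a Hamiltonian cycle removed.\<close>
definition cross_adj :: "nat \<Rightarrow> nat \<Rightarrow> nat \<Rightarrow> bool" where
  "cross_adj n i j \<longleftrightarrow> j \<noteq> i \<and> j \<noteq> succ_mod n i"

definition Knn_minus_cycle :: "nat \<Rightarrow> graph" where
  "Knn_minus_cycle n = ({0..<2*n}, \<lambda>u w. (u < n \<and> n \<le> w \<and> w < 2*n \<and> cross_adj n u (w - n))
     \<or> (w < n \<and> n \<le> u \<and> u < 2*n \<and> cross_adj n w (u - n)))"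

lemma cross_adj_alt: "i < n \<Longrightarrow> j < n \<Longrightarrow> cross_adj n i j \<longleftrightarrow> i \<noteq> j \<and> i \<noteq> pred_mod n j"
  unfolding cross_adj_def using succ_mod_eq_iff by blast

lemma verts_Knn_minus_cycle: "verts (Knn_minus_cycle n) = {0..<2*n}"
  by (simp add: Knn_minus_cycle_def verts_def)

lemma adj_Knn_minus_cycle: "adj (Knn_minus_cycle n) u w \<longleftrightarrow>
    (u < n \<and> n \<le> w \<and> w < 2*n \<and> cross_adj n u (w - n)) \<or> (w < n \<and> n \<le> u \<and> u < 2*n \<and> cross_adj n w (u - n))"
  by (simp add: Knn_minus_cycle_def adj_def)

lemma adj_Knn_minus_cycle_cross:
  "i < n \<Longrightarrow> j < n \<Longrightarrow> adj (Knn_minus_cycle n) i (n + j) \<longleftrightarrow> cross_adj n i j"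
  "i < n \<Longrightarrow> j < n \<Longrightarrow> adj (Knn_minus_cycle n) (n + j) i \<longleftrightarrow> cross_adj n i j"
  by (simp_all add: adj_Knn_minus_cycle)

lemma Knn_minus_cycle_wf: "wf_graph (Knn_minus_cycle n)"
  unfolding wf_graph_def verts_Knn_minus_cycle adj_Knn_minus_cycle cross_adj_def by auto

lemma Knn_minus_cycle_bipartite: "bipartite_by (Knn_minus_cycle n) {..<n}"
  unfolding bipartite_by_def adj_Knn_minus_cycle by auto

lemma Knn_minus_cycle_vertex_cases:
  assumes "u \<in> verts (Knn_minus_cycle n)"
  obtains "u < n" | j where "j < n" "u = n + j"
proof (cases "u < n")
  case False
  then have "u - n < n" "u = n + (u - n)" using assms unfolding verts_Knn_minus_cycle by auto
  then show ?thesis using that(2) by blast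
qed

lemma ex_less_notin: "finite X \<Longrightarrow> card X < n \<Longrightarrow> \<exists>j<n. j \<notin> X"
  using ex_notin_if_card_less[of X "{..<n}"] by auto

lemma Knn_minus_cycle_C4: "n \<ge> 5 \<Longrightarrow> contains_subgraph (Knn_minus_cycle n) C4"
  by (rule contains_C4I[of _ 0 "n + 3" 1 "n + 4"])
    (auto simp: adj_Knn_minus_cycle verts_Knn_minus_cycle cross_adj_def succ_mod_def Knn_minus_cycle_wf)

lemma Knn_minus_cycle_degree:
  assumes n: "n \<ge> 4" and u: "u \<in> verts (Knn_minus_cycle n)"
  shows "\<exists>z\<in>verts (Knn_minus_cycle n). adj (Knn_minus_cycle n) u z \<and> z \<noteq> v"
  using u
proof (cases rule: Knn_minus_cycle_vertex_cases)
  case 1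
  obtain j where "j < n" "j \<notin> {u, succ_mod n u, v - n}"
    using ex_less_notin[of "{u, succ_mod n u, v - n}" n] card_enum_le(2)[of u "succ_mod n u" "v - n"] n by auto
  then show ?thesis using 1
    by (intro bexI[of _ "n + j"]) (auto simp: verts_Knn_minus_cycle adj_Knn_minus_cycle_cross cross_adj_def)
next
  case (2 j)
  obtain i where "i < n" "i \<notin> {j, pred_mod n j, v}"
    using ex_less_notin[of "{j, pred_mod n j, v}" n] card_enum_le(2)[of j "pred_mod n j" v] n by auto
  then show ?thesis using 2 cross_adj_alt[of i n j]
    by (intro bexI[of _ i]) (auto simp: verts_Knn_minus_cycle adj_Knn_minus_cycle_cross)
qed

lemma Knn_minus_cycle_same_side_common:
  assumes n: "n \<ge> 5" and u: "u \<in> verts (Knn_minus_cycle n)"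
  shows "\<exists>z\<in>verts (Knn_minus_cycle n). z \<noteq> u \<and> (z \<in> {..<n} \<longleftrightarrow> u \<in> {..<n})
    \<and> common_neighbour (Knn_minus_cycle n) u z"
  using u
proof (cases rule: Knn_minus_cycle_vertex_cases)
  case 1
  obtain i where i: "i < n" "i \<noteq> u" using ex_less_notin[of "{u}" n] n by auto
  obtain j where "j < n" "j \<notin> {u, succ_mod n u, i, succ_mod n i}"
    using ex_less_notin[of "{u, succ_mod n u, i, succ_mod n i}" n]
      card_enum_le(3)[of u "succ_mod n u" i "succ_mod n i"] n by auto
  then have "common_neighbour (Knn_minus_cycle n) u i"
    unfolding common_neighbour_def using i 1
    by (intro bexI[of _ "n + j"]) (auto simp: verts_Knn_minus_cycle adj_Knn_minus_cycle_cross cross_adj_def)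
  then show ?thesis using i 1 by (intro bexI[of _ i]) (auto simp: verts_Knn_minus_cycle)
next
  case (2 j)
  obtain j' where j': "j' < n" "j' \<noteq> j" using ex_less_notin[of "{j}" n] n by auto
  obtain i where "i < n" "i \<notin> {j, pred_mod n j, j', pred_mod n j'}"
    using ex_less_notin[of "{j, pred_mod n j, j', pred_mod n j'}" n]
      card_enum_le(3)[of j "pred_mod n j" j' "pred_mod n j'"] n by auto
  then have "common_neighbour (Knn_minus_cycle n) u (n + j')"
    unfolding common_neighbour_def using 2 j' cross_adj_alt[of i n j] cross_adj_alt[of i n j']
    by (intro bexI[of _ i]) (auto simp: verts_Knn_minus_cycle adj_Knn_minus_cycle_cross)
  then show ?thesis using 2 j' by (intro bexI[of _ "n + j'"]) (auto simp: verts_Knn_minus_cycle)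
qed

lemma Knn_minus_cycle_other_side_non_adj:
  assumes u: "u \<in> verts (Knn_minus_cycle n)"
  shows "\<exists>z\<in>verts (Knn_minus_cycle n). (z \<in> {..<n} \<longleftrightarrow> u \<notin> {..<n}) \<and> \<not> adj (Knn_minus_cycle n) u z"
  using u
proof (cases rule: Knn_minus_cycle_vertex_cases)
  case 1
  then show ?thesis
    by (intro bexI[of _ "n + u"]) (auto simp: verts_Knn_minus_cycle adj_Knn_minus_cycle_cross cross_adj_def)
next
  case (2 j)
  then show ?thesis
    by (intro bexI[of _ j]) (auto simp: verts_Knn_minus_cycle adj_Knn_minus_cycle_cross cross_adj_def)
qed

lemma Knn_minus_cycle_separate:
  assumes n: "n \<ge> 3" and u: "u \<in> verts (Knn_minus_cycle n)" and v: "v \<in> verts (Knn_minus_cycle n)"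
    and uv: "u \<noteq> v" and same: "u \<in> {..<n} \<longleftrightarrow> v \<in> {..<n}"
  shows "\<exists>z\<in>verts (Knn_minus_cycle n). adj (Knn_minus_cycle n) z u \<and> \<not> adj (Knn_minus_cycle n) z v"
  using u
proof (cases rule: Knn_minus_cycle_vertex_cases)
  case 1
  then have "v < n" using same by simp
  show ?thesis
  proof (cases "v = succ_mod n u")
    case False
    then show ?thesis using 1 \<open>v < n\<close> uv
      by (intro bexI[of _ "n + v"]) (auto simp: verts_Knn_minus_cycle adj_Knn_minus_cycle_cross cross_adj_def)
  next
    case True
    have "succ_mod n v \<noteq> u" "succ_mod n v \<noteq> v"
      using succ_mod_succ_mod_neq[OF n 1] succ_mod_neq[OF _ \<open>v < n\<close>] n True by auto
    then show ?thesis using 1 \<open>v < n\<close> uv True succ_mod_less[OF \<open>v < n\<close>]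
      by (intro bexI[of _ "n + succ_mod n v"])
        (auto simp: verts_Knn_minus_cycle adj_Knn_minus_cycle_cross cross_adj_def)
  qed
next
  case (2 j)
  obtain j' where j': "j' < n" "v = n + j'"
    using v same 2 by (cases rule: Knn_minus_cycle_vertex_cases) auto
  have "j \<noteq> j'" using uv 2 j' by auto
  show ?thesis
  proof (cases "j' = pred_mod n j")
    case False
    then show ?thesis using 2 j' \<open>j \<noteq> j'\<close> cross_adj_alt[of j' n j] cross_adj_alt[of j' n j']
      by (intro bexI[of _ j']) (auto simp: verts_Knn_minus_cycle adj_Knn_minus_cycle_cross)
  next
    case True
    have "pred_mod n j' \<noteq> j" "pred_mod n j' \<noteq> j'"
      using pred_mod_pred_mod_neq[OF n 2(1)] pred_mod_neq[OF _ j'(1)] n True by auto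
    then show ?thesis using 2 j' \<open>j \<noteq> j'\<close> True pred_mod_less[OF j'(1)]
        cross_adj_alt[of "pred_mod n j'" n j] cross_adj_alt[of "pred_mod n j'" n j']
      by (intro bexI[of _ "pred_mod n j'"]) (auto simp: verts_Knn_minus_cycle adj_Knn_minus_cycle_cross)
  qed
qed

lemma Knn_minus_cycle_third:
  assumes n: "n \<ge> 3" and u: "u \<in> verts (Knn_minus_cycle n)"
  shows "\<exists>z\<in>verts (Knn_minus_cycle n). z \<noteq> u \<and> z \<noteq> v \<and> (z \<in> {..<n} \<longleftrightarrow> u \<in> {..<n})"
  using u
proof (cases rule: Knn_minus_cycle_vertex_cases)
  case 1
  obtain i where "i < n" "i \<notin> {u, v}"
    using ex_less_notin[of "{u, v}" n] card_enum_le(1)[of u v] n by auto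
  then show ?thesis using 1 by (intro bexI[of _ i]) (auto simp: verts_Knn_minus_cycle)
next
  case (2 j)
  obtain i where "i < n" "i \<notin> {u - n, v - n}"
    using ex_less_notin[of "{u - n, v - n}" n] card_enum_le(1)[of "u - n" "v - n"] n by auto
  then show ?thesis using 2 by (intro bexI[of _ "n + i"]) (auto simp: verts_Knn_minus_cycle)
qed

lemma Knn_minus_cycle_avoid_across:
  assumes n: "n \<ge> 2" and u: "u \<in> verts (Knn_minus_cycle n)" and v: "v \<in> verts (Knn_minus_cycle n)"
    and across: "u \<in> {..<n} \<longleftrightarrow> v \<notin> {..<n}"
  shows "\<exists>z\<in>verts (Knn_minus_cycle n). z \<noteq> u \<and> (z \<in> {..<n} \<longleftrightarrow> u \<in> {..<n})
    \<and> \<not> adj (Knn_minus_cycle n) z v"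
  using u
proof (cases rule: Knn_minus_cycle_vertex_cases)
  case 1
  obtain j where j: "j < n" "v = n + j"
    using v across 1 by (cases rule: Knn_minus_cycle_vertex_cases) auto
  obtain z where z: "z \<in> {j, pred_mod n j}" "z \<noteq> u"
    using pred_mod_neq[OF n j(1)] by auto
  have "z < n" using z pred_mod_less[OF j(1)] j by auto
  then have "\<not> cross_adj n z j" using z cross_adj_alt[of z n j] j by auto
  then show ?thesis using z j 1 \<open>z < n\<close>
    by (intro bexI[of _ z]) (auto simp: verts_Knn_minus_cycle adj_Knn_minus_cycle_cross)
next
  case (2 j)
  then have "v < n" using across v by auto
  obtain z where z: "z \<in> {v, succ_mod n v}" "z \<noteq> j"
    using succ_mod_neq[OF n \<open>v < n\<close>] by auto
  have "z < n" using z succ_mod_less[OF \<open>v < n\<close>] \<open>v < n\<close> by auto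
  have "\<not> cross_adj n v z" using z unfolding cross_adj_def by auto
  then show ?thesis using z 2 \<open>v < n\<close> \<open>z < n\<close>
    by (intro bexI[of _ "n + z"]) (auto simp: verts_Knn_minus_cycle adj_Knn_minus_cycle_cross)
qed

lemma Knn_minus_cycle_rich: "n \<ge> 5 \<Longrightarrow> rich (Knn_minus_cycle n)"
  by (intro rich_if_bipartite[OF Knn_minus_cycle_wf Knn_minus_cycle_bipartite]
      Knn_minus_cycle_degree Knn_minus_cycle_same_side_common Knn_minus_cycle_other_side_non_adj
      Knn_minus_cycle_separate Knn_minus_cycle_third Knn_minus_cycle_avoid_across) auto

lemma del_verts_edge_reachable:
  "u \<in> verts G \<Longrightarrow> w \<in> verts G \<Longrightarrow> u \<notin> S \<Longrightarrow> w \<notin> S \<Longrightarrow> adj G u w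
    \<Longrightarrow> (u,w) \<in> (edge_rel (del_verts G S))\<^sup>*"
  by (simp add: edge_rel_iff r_into_rtrancl)

lemma Knn_minus_cycle_del_reach_same_side:
  assumes S: "finite S" "card S + 4 < n" and ic: "i < n" "c < n" "i \<notin> S" "c \<notin> S"
  shows "(i, c) \<in> (edge_rel (del_verts (Knn_minus_cycle n) S))\<^sup>*"
proof -
  let ?X = "{i, succ_mod n i, c, succ_mod n c} \<union> (\<lambda>v. v - n) ` S"
  have "card ?X \<le> 4 + card S"
    using card_Un_le[of "{i, succ_mod n i, c, succ_mod n c}" "(\<lambda>v. v - n) ` S"]
      card_enum_le(3)[of i "succ_mod n i" c "succ_mod n c"] card_image_le[OF S(1), of "\<lambda>v. v - n"]
    by linarith
  then obtain j where j: "j < n" "j \<notin> ?X"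
    using ex_less_notin[of ?X n] S by auto
  then have "n + j \<notin> S" by (metis UnI2 add_diff_cancel_left' image_eqI)
  then have "(i, n + j) \<in> (edge_rel (del_verts (Knn_minus_cycle n) S))\<^sup>*"
      "(n + j, c) \<in> (edge_rel (del_verts (Knn_minus_cycle n) S))\<^sup>*"
    using ic j by (auto intro!: del_verts_edge_reachable
        simp: verts_Knn_minus_cycle adj_Knn_minus_cycle_cross cross_adj_def)
  then show ?thesis by (rule rtrancl_trans)
qed

lemma Knn_minus_cycle_k_connected:
  assumes k: "k \<ge> 1" and n: "n \<ge> k + 4"
  shows "k_connected k (Knn_minus_cycle n)"
proof (rule k_connectedI[OF Knn_minus_cycle_wf k])
  show "k < card (verts (Knn_minus_cycle n))" using n by (simp add: verts_Knn_minus_cycle)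
  fix S assume S: "S \<subseteq> verts (Knn_minus_cycle n)" "card S < k"
  have finS: "finite S" using S(1) finite_subset by (auto simp: verts_Knn_minus_cycle)
  have "card S < n" using S n by linarith
  then obtain c where c: "c < n" "c \<notin> S" using ex_less_notin[OF finS] by blast
  let ?E = "(edge_rel (del_verts (Knn_minus_cycle n) S))\<^sup>*"
  show "connected (del_verts (Knn_minus_cycle n) S)"
  proof (rule connected_if_all_reach[OF wf_graph_del_verts[OF Knn_minus_cycle_wf]])
    show "c \<in> verts (del_verts (Knn_minus_cycle n) S)" using c by (simp add: verts_Knn_minus_cycle)
    fix x assume x: "x \<in> verts (del_verts (Knn_minus_cycle n) S)"
    then have xv: "x \<in> verts (Knn_minus_cycle n)" "x \<notin> S" by auto
    from xv(1) show "(x, c) \<in> ?E"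
    proof (cases rule: Knn_minus_cycle_vertex_cases)
      case 1
      then show ?thesis
        using Knn_minus_cycle_del_reach_same_side[OF finS _ 1 c(1) xv(2) c(2)] S n by linarith
    next
      case (2 j)
      obtain i where i: "i < n" "i \<notin> {j, pred_mod n j} \<union> S"
        using ex_less_notin[of "{j, pred_mod n j} \<union> S" n] card_Un_le[of "{j, pred_mod n j}" S]
          card_enum_le(1)[of j "pred_mod n j"] finS S n by fastforce
      then have "cross_adj n i j" using cross_adj_alt[OF i(1) 2(1)] by auto
      then have "(x, i) \<in> ?E" using i 2 xv
        by (intro del_verts_edge_reachable) (auto simp: verts_Knn_minus_cycle adj_Knn_minus_cycle_cross)
      moreover have "(i, c) \<in> ?E"
        using Knn_minus_cycle_del_reach_same_side[OF finS _ i(1) c(1) _ c(2)] i S n by auto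
      ultimately show ?thesis by (rule rtrancl_trans)
    qed
  qed
qed

section \<open>The affine incidence graph\<close>

text \<open>Point (a, b) of the affine plane over the integers mod p lies on the non-vertical line
  y = m x + c.\<close>
definition on_line :: "nat \<Rightarrow> nat \<Rightarrow> nat \<Rightarrow> nat \<Rightarrow> nat \<Rightarrow> bool" where
  "on_line p a b m c \<longleftrightarrow> int p dvd (int b - int m * int a - int c)"

lemma eq_if_int_dvd_diff:
  assumes "(x::nat) < p" "y < p" "int p dvd (int x - int y)"
  shows "x = y"
proof (rule ccontr)
  assume "x \<noteq> y"
  then have "int x - int y \<noteq> 0" by simp
  from dvd_imp_le_int[OF this assms(3)] have "int p \<le> \<bar>int x - int y\<bar>" by simp
  then show False using assms(1,2) by linarith
qed

lemma int_dvd_diff_iff_eq: "x < p \<Longrightarrow> y < p \<Longrightarrow> int p dvd (int x - int y) \<longleftrightarrow> x = y"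
  using eq_if_int_dvd_diff by auto

lemma on_line_unique_value:
  assumes "y < p" "y' < p" "on_line p x y m c" "on_line p x y' m c"
  shows "y = y'"
proof -
  have "int p dvd ((int y - int m * int x - int c) - (int y' - int m * int x - int c))"
    using assms(3,4) unfolding on_line_def by (rule dvd_diff)
  then show ?thesis using int_dvd_diff_iff_eq[OF assms(1,2)] by simp
qed

lemma on_line_slope_0: "b < p \<Longrightarrow> c < p \<Longrightarrow> on_line p a b 0 c \<longleftrightarrow> b = c"
  and on_line_abscissa_0: "y < p \<Longrightarrow> c < p \<Longrightarrow> on_line p 0 y m c \<longleftrightarrow> y = c"
  unfolding on_line_def using int_dvd_diff_iff_eq by simp_all

lemma two_points_determine_line:
  assumes p: "prime p" and lt: "a < p" "a' < p" "b < p" "b' < p" "m < p" "m' < p" "c < p" "c' < p"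
    and on: "on_line p a b m c" "on_line p a b m' c'" "on_line p a' b' m c" "on_line p a' b' m' c'"
    and ne: "(a,b) \<noteq> (a',b')"
  shows "m = m' \<and> c = c'"
proof -
  let ?P = "int p"
  have on': "?P dvd (int b - int m * int a - int c)" "?P dvd (int b - int m' * int a - int c')"
      "?P dvd (int b' - int m * int a' - int c)" "?P dvd (int b' - int m' * int a' - int c')"
    using on unfolding on_line_def by auto
  note d = dvd_diff[OF on'(1,2)] dvd_diff[OF on'(1,3)]
  have "?P dvd ((int b - int m * int a - int c) - (int b - int m' * int a - int c')
      - ((int b' - int m * int a' - int c) - (int b' - int m' * int a' - int c')))"
    using dvd_diff[OF d(1) dvd_diff[OF on'(3,4)]] .
  moreover have "(int b - int m * int a - int c) - (int b - int m' * int a - int c')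
      - ((int b' - int m * int a' - int c) - (int b' - int m' * int a' - int c'))
      = (int m' - int m) * (int a - int a')" by (simp add: algebra_simps)
  ultimately have "?P dvd (int m' - int m) \<or> ?P dvd (int a - int a')"
    using p by (simp add: prime_dvd_mult_iff)
  then show ?thesis
  proof
    assume "?P dvd (int m' - int m)"
    then have "m' = m" by (rule eq_if_int_dvd_diff[OF lt(6,5)])
    moreover from this have "(int b - int m * int a - int c) - (int b - int m' * int a - int c')
        = int c' - int c" by simp
    ultimately show ?thesis using eq_if_int_dvd_diff[OF lt(8,7)] d(1) by simp
  next
    assume "?P dvd (int a - int a')"
    then have "a = a'" by (rule eq_if_int_dvd_diff[OF lt(1,2)])
    moreover from this have "(int b - int m * int a - int c) - (int b' - int m * int a' - int c)
        = int b - int b'" by simp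
    ultimately show ?thesis using eq_if_int_dvd_diff[OF lt(3,4)] d(2) ne by simp
  qed
qed

definition intercept :: "nat \<Rightarrow> nat \<Rightarrow> nat \<Rightarrow> nat \<Rightarrow> nat" where
  "intercept p a b m = nat ((int b - int m * int a) mod int p)"

definition line_value :: "nat \<Rightarrow> nat \<Rightarrow> nat \<Rightarrow> nat \<Rightarrow> nat" where
  "line_value p m c x = nat ((int m * int x + int c) mod int p)"

lemma intercept: "p > 0 \<Longrightarrow> intercept p a b m < p \<and> on_line p a b m (intercept p a b m)"
  unfolding intercept_def on_line_def
  by (simp add: nat_less_iff minus_mod_eq_mult_div[symmetric])

lemma line_value: "p > 0 \<Longrightarrow> line_value p m c x < p \<and> on_line p x (line_value p m c x) m c"
  unfolding line_value_def on_line_def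
  by (simp add: nat_less_iff) (metis diff_diff_eq dvd_minus_iff minus_diff_eq minus_mod_eq_mult_div dvd_triv_left)

lemma lines_of_distinct_slopes_meet:
  assumes p: "prime p" and lt: "m < p" "m' < p" and ne: "m \<noteq> m'"
  obtains x y where "x < p" "y < p" "on_line p x y m c" "on_line p x y m' c'"
proof -
  let ?P = "int p"
  have p0: "p > 0" using p prime_gt_0_nat by blast
  have "\<not> ?P dvd (int m - int m')" using int_dvd_diff_iff_eq[OF lt] ne by simp
  then have "coprime (int m - int m') ?P"
    using p by (simp add: prime_imp_coprime coprime_commute)
  then obtain u v where uv: "u * (int m - int m') + v * ?P = 1"
    using bezout_int[of "int m - int m'" ?P] by auto
  let ?w = "u * (int c' - int c)"
  define x where "x = nat (?w mod ?P)"
  have x: "x < p" "int x = ?w mod ?P" using p0 by (simp_all add: x_def nat_less_iff)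
  have "(int m - int m') * int x - (int c' - int c)
      = (int m - int m') * (?w mod ?P - ?w) + (u * (int m - int m') - 1) * (int c' - int c)"
    unfolding x(2) by (simp add: algebra_simps)
  also have "\<dots> = (int m - int m') * (- (?P * (?w div ?P))) + (- v * ?P) * (int c' - int c)"
  proof -
    have "?w mod ?P - ?w = - (?P * (?w div ?P))" using minus_mod_eq_mult_div[of ?w ?P] by simp
    moreover have "u * (int m - int m') - 1 = - v * ?P" using uv by simp
    ultimately show ?thesis by (simp only:)
  qed
  finally have shift: "?P dvd ((int m - int m') * int x - (int c' - int c))" by simp
  obtain y where y: "y < p" "on_line p x y m c" using line_value[OF p0] by blast
  then have "?P dvd ((int y - int m * int x - int c) + ((int m - int m') * int x - (int c' - int c)))"
    using shift unfolding on_line_def by (intro dvd_add)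
  then have "on_line p x y m' c'" unfolding on_line_def by (simp add: algebra_simps)
  then show ?thesis using that x(1) y by blast
qed

definition point_vertex :: "nat \<Rightarrow> nat \<Rightarrow> nat \<Rightarrow> nat" where
  "point_vertex p a b = a * p + b"

definition line_vertex :: "nat \<Rightarrow> nat \<Rightarrow> nat \<Rightarrow> nat" where
  "line_vertex p m c = p * p + m * p + c"

text \<open>The point--line incidence graph of the affine plane over the integers mod p, without
  the vertical lines; points are encoded below p * p and lines above.\<close>
definition affine_incidence_graph :: "nat \<Rightarrow> graph" where
  "affine_incidence_graph p = ({0..<2*p*p}, \<lambda>u w. \<exists>a b m c. a < p \<and> b < p \<and> m < p \<and> c < p
      \<and> on_line p a b m c \<and> ((u = point_vertex p a b \<and> w = line_vertex p m c)
        \<or> (u = line_vertex p m c \<and> w = point_vertex p a b)))"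

lemma verts_affine_incidence_graph: "verts (affine_incidence_graph p) = {0..<2*p*p}"
  by (simp add: affine_incidence_graph_def verts_def)

lemma adj_affine_incidence_graph: "adj (affine_incidence_graph p) u w \<longleftrightarrow>
    (\<exists>a b m c. a < p \<and> b < p \<and> m < p \<and> c < p \<and> on_line p a b m c
      \<and> ((u = point_vertex p a b \<and> w = line_vertex p m c) \<or> (u = line_vertex p m c \<and> w = point_vertex p a b)))"
  by (simp add: affine_incidence_graph_def adj_def)

lemma point_vertex_less: "a < p \<Longrightarrow> b < p \<Longrightarrow> point_vertex p a b < p * p"
proof -
  assume "a < p" "b < p"
  then have "a * p + b < (a + 1) * p" by simp
  also have "\<dots> \<le> p * p" using \<open>a < p\<close> by (intro mult_right_mono) auto
  finally show ?thesis unfolding point_vertex_def .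
qed

lemma line_vertex_bounds: "p * p \<le> line_vertex p m c" "m < p \<Longrightarrow> c < p \<Longrightarrow> line_vertex p m c < 2 * p * p"
  using point_vertex_less[of m p c] unfolding line_vertex_def point_vertex_def by simp_all

lemma point_vertex_eq_iff: "b < p \<Longrightarrow> b' < p \<Longrightarrow> point_vertex p a b = point_vertex p a' b' \<longleftrightarrow> a = a' \<and> b = b'"
proof
  assume b: "b < p" "b' < p" and e: "point_vertex p a b = point_vertex p a' b'"
  have "(a * p + b) div p = a" "(a * p + b) mod p = b" "(a' * p + b') div p = a'" "(a' * p + b') mod p = b'"
    using b by auto
  then show "a = a' \<and> b = b'" using e unfolding point_vertex_def by metis
qed simp

lemma line_vertex_eq_iff: "c < p \<Longrightarrow> c' < p \<Longrightarrow> line_vertex p m c = line_vertex p m' c' \<longleftrightarrow> m = m' \<and> c = c'"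
  using point_vertex_eq_iff[of c p c' m m'] unfolding line_vertex_def point_vertex_def by simp

lemma point_vertex_neq_line_vertex: "a < p \<Longrightarrow> b < p \<Longrightarrow> point_vertex p a b \<noteq> line_vertex p m c"
  using point_vertex_less[of a p b] line_vertex_bounds(1)[of p m c] by linarith

lemma affine_incidence_graph_cases:
  assumes "u \<in> verts (affine_incidence_graph p)"
  obtains a b where "a < p" "b < p" "u = point_vertex p a b"
    | m c where "m < p" "c < p" "u = line_vertex p m c"
proof (cases "u < p * p")
  case True
  then have "p > 0" by (cases p) auto
  then show ?thesis using that(1)[of "u div p" "u mod p"] True
    by (simp add: less_mult_imp_div_less point_vertex_def)
next
  case False
  let ?v = "u - p * p"
  have "?v < p * p" using assms False by (simp add: verts_affine_incidence_graph)
  then have "p > 0" by (cases p) auto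
  then show ?thesis using that(2)[of "?v div p" "?v mod p"] False \<open>?v < p * p\<close>
    by (simp add: less_mult_imp_div_less line_vertex_def)
qed

lemma point_vertex_in: "a < p \<Longrightarrow> b < p \<Longrightarrow> point_vertex p a b \<in> verts (affine_incidence_graph p)"
  and line_vertex_in: "m < p \<Longrightarrow> c < p \<Longrightarrow> line_vertex p m c \<in> verts (affine_incidence_graph p)"
  using point_vertex_less[of a p b] line_vertex_bounds(2)[of m p c]
  by (simp_all add: verts_affine_incidence_graph)

lemma adj_point_line: "a < p \<Longrightarrow> b < p \<Longrightarrow> m < p \<Longrightarrow> c < p \<Longrightarrow>
    adj (affine_incidence_graph p) (point_vertex p a b) (line_vertex p m c) \<longleftrightarrow> on_line p a b m c"
  and adj_line_point: "a < p \<Longrightarrow> b < p \<Longrightarrow> m < p \<Longrightarrow> c < p \<Longrightarrow>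
    adj (affine_incidence_graph p) (line_vertex p m c) (point_vertex p a b) \<longleftrightarrow> on_line p a b m c"
  unfolding adj_affine_incidence_graph
  using point_vertex_eq_iff line_vertex_eq_iff point_vertex_neq_line_vertex by metis+

lemma affine_incidence_graph_wf: "wf_graph (affine_incidence_graph p)"
proof -
  have "u \<in> verts (affine_incidence_graph p) \<and> w \<in> verts (affine_incidence_graph p)"
    if "adj (affine_incidence_graph p) u w" for u w
    using that unfolding adj_affine_incidence_graph using point_vertex_in line_vertex_in by blast
  moreover have "\<forall>u w. adj (affine_incidence_graph p) u w \<longrightarrow> adj (affine_incidence_graph p) w u"
    unfolding adj_affine_incidence_graph by blast
  moreover have "\<forall>u. \<not> adj (affine_incidence_graph p) u u"
    unfolding adj_affine_incidence_graph using point_vertex_neq_line_vertex by metis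
  ultimately show ?thesis unfolding wf_graph_def verts_affine_incidence_graph by blast
qed

lemma affine_incidence_graph_bipartite: "bipartite_by (affine_incidence_graph p) {..<p*p}"
  unfolding bipartite_by_def adj_affine_incidence_graph
  using point_vertex_less line_vertex_bounds(1) by (metis lessThan_iff not_le)

lemma add_mod_neq_self: "0 < k \<Longrightarrow> k < p \<Longrightarrow> (b::nat) < p \<Longrightarrow> (b + k) mod p \<noteq> b"
  by (cases "b + k < p") (auto simp: mod_if)

lemma point_vertex_side: "a < p \<Longrightarrow> b < p \<Longrightarrow> point_vertex p a b \<in> {..<p*p}"
  and line_vertex_side: "line_vertex p m c \<notin> {..<p*p}"
  using point_vertex_less line_vertex_bounds(1)[of p m c] by auto

lemma affine_incidence_graph_degree:
  assumes p: "p \<ge> 2" and u: "u \<in> verts (affine_incidence_graph p)"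
  shows "\<exists>z\<in>verts (affine_incidence_graph p). adj (affine_incidence_graph p) u z \<and> z \<noteq> v"
  using u
proof (cases rule: affine_incidence_graph_cases)
  case (1 a b)
  let ?L0 = "line_vertex p 0 (intercept p a b 0)" and ?L1 = "line_vertex p 1 (intercept p a b 1)"
  have "?L0 \<noteq> ?L1" using line_vertex_eq_iff intercept p by simp
  moreover have "adj (affine_incidence_graph p) u ?L0" "adj (affine_incidence_graph p) u ?L1"
    using 1 intercept adj_point_line p by auto
  moreover have "?L0 \<in> verts (affine_incidence_graph p)" "?L1 \<in> verts (affine_incidence_graph p)"
    using line_vertex_in intercept p by auto
  ultimately show ?thesis by metis
next
  case (2 m c)
  let ?P0 = "point_vertex p 0 (line_value p m c 0)" and ?P1 = "point_vertex p 1 (line_value p m c 1)"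
  have "?P0 \<noteq> ?P1" using point_vertex_eq_iff line_value p by simp
  moreover have "adj (affine_incidence_graph p) u ?P0" "adj (affine_incidence_graph p) u ?P1"
    using 2 line_value adj_line_point p by auto
  moreover have "?P0 \<in> verts (affine_incidence_graph p)" "?P1 \<in> verts (affine_incidence_graph p)"
    using point_vertex_in line_value p by auto
  ultimately show ?thesis by metis
qed

lemma affine_incidence_graph_same_side_common:
  assumes p: "p \<ge> 2" and u: "u \<in> verts (affine_incidence_graph p)"
  shows "\<exists>z\<in>verts (affine_incidence_graph p). z \<noteq> u \<and> (z \<in> {..<p*p} \<longleftrightarrow> u \<in> {..<p*p})
    \<and> common_neighbour (affine_incidence_graph p) u z"
  using u
proof (cases rule: affine_incidence_graph_cases)
  case (1 a b)
  let ?z = "point_vertex p ((a + 1) mod p) b"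
  have "(a + 1) mod p < p" "(a + 1) mod p \<noteq> a" using p 1 add_mod_neq_self[of 1 p a] by auto
  then have "?z \<noteq> u" "common_neighbour (affine_incidence_graph p) u ?z"
    unfolding common_neighbour_def using 1 point_vertex_eq_iff adj_line_point line_vertex_in on_line_slope_0 p
    by (auto intro!: bexI[of _ "line_vertex p 0 b"])
  then show ?thesis using 1 \<open>(a + 1) mod p < p\<close> point_vertex_side point_vertex_in
    by (intro bexI[of _ ?z]) auto
next
  case (2 m c)
  let ?z = "line_vertex p ((m + 1) mod p) c"
  have "(m + 1) mod p < p" "(m + 1) mod p \<noteq> m" using p 2 add_mod_neq_self[of 1 p m] by auto
  then have "?z \<noteq> u" "common_neighbour (affine_incidence_graph p) u ?z"
    unfolding common_neighbour_def using 2 line_vertex_eq_iff adj_point_line point_vertex_in on_line_abscissa_0 p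
    by (auto intro!: bexI[of _ "point_vertex p 0 c"])
  then show ?thesis using 2 \<open>(m + 1) mod p < p\<close> line_vertex_side line_vertex_in
    by (intro bexI[of _ ?z]) auto
qed

lemma affine_incidence_graph_other_side_non_adj:
  assumes p: "p \<ge> 2" and u: "u \<in> verts (affine_incidence_graph p)"
  shows "\<exists>z\<in>verts (affine_incidence_graph p). (z \<in> {..<p*p} \<longleftrightarrow> u \<notin> {..<p*p})
    \<and> \<not> adj (affine_incidence_graph p) u z"
  using u
proof (cases rule: affine_incidence_graph_cases)
  case (1 a b)
  have "(b + 1) mod p < p" "(b + 1) mod p \<noteq> b" using p 1 add_mod_neq_self[of 1 p b] by auto
  then show ?thesis using 1 adj_point_line line_vertex_in point_vertex_side line_vertex_side on_line_slope_0
    by (intro bexI[of _ "line_vertex p 0 ((b + 1) mod p)"]) auto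
next
  case (2 m c)
  have "(c + 1) mod p < p" "(c + 1) mod p \<noteq> c" using p 2 add_mod_neq_self[of 1 p c] by auto
  then show ?thesis using 2 adj_line_point point_vertex_in point_vertex_side line_vertex_side on_line_abscissa_0
    by (intro bexI[of _ "point_vertex p 0 ((c + 1) mod p)"]) auto
qed

lemma affine_incidence_graph_separate:
  assumes p: "prime p" and u: "u \<in> verts (affine_incidence_graph p)" and v: "v \<in> verts (affine_incidence_graph p)"
    and uv: "u \<noteq> v" and same: "u \<in> {..<p*p} \<longleftrightarrow> v \<in> {..<p*p}"
  shows "\<exists>z\<in>verts (affine_incidence_graph p). adj (affine_incidence_graph p) z u
    \<and> \<not> adj (affine_incidence_graph p) z v"
proof -
  have p0: "p > 0" "1 < p" using prime_gt_1_nat[OF p] by auto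
  from u show ?thesis
  proof (cases rule: affine_incidence_graph_cases)
    case (1 a b)
    obtain a' b' where ab': "a' < p" "b' < p" "v = point_vertex p a' b'"
      using v same 1 point_vertex_side line_vertex_side by (cases rule: affine_incidence_graph_cases) auto
    have ne: "(a,b) \<noteq> (a',b')" using uv 1 ab' by auto
    let ?c0 = "intercept p a b 0" and ?c1 = "intercept p a b 1"
    have c: "?c0 < p" "on_line p a b 0 ?c0" "?c1 < p" "on_line p a b 1 ?c1"
      using intercept[OF p0(1)] by auto
    have "\<not> on_line p a' b' 0 ?c0 \<or> \<not> on_line p a' b' 1 ?c1"
      using two_points_determine_line[OF p 1(1) ab'(1) 1(2) ab'(2) p0 c(1,3,2,4) _ _ ne] by auto
    then obtain k where "k \<in> {0, 1}" "\<not> on_line p a' b' k (intercept p a b k)" by auto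
    then show ?thesis using 1 ab' intercept[OF p0(1)] adj_line_point line_vertex_in p0
      by (intro bexI[of _ "line_vertex p k (intercept p a b k)"]) auto
  next
    case (2 m c)
    obtain m' c' where mc': "m' < p" "c' < p" "v = line_vertex p m' c'"
      using v same 2 point_vertex_side line_vertex_side by (cases rule: affine_incidence_graph_cases) auto
    have ne: "\<not> (m = m' \<and> c = c')" using uv 2 mc' by auto
    let ?y0 = "line_value p m c 0" and ?y1 = "line_value p m c 1"
    have y: "?y0 < p" "on_line p 0 ?y0 m c" "?y1 < p" "on_line p 1 ?y1 m c"
      using line_value[OF p0(1)] by auto
    have "\<not> on_line p 0 ?y0 m' c' \<or> \<not> on_line p 1 ?y1 m' c'"
      using two_points_determine_line[OF p p0 y(1,3) 2(1) mc'(1) 2(2) mc'(2) y(2) _ y(4)] ne by auto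
    then obtain x where "x \<in> {0, 1}" "\<not> on_line p x (line_value p m c x) m' c'" by auto
    then show ?thesis using 2 mc' line_value[OF p0(1)] adj_point_line point_vertex_in p0
      by (intro bexI[of _ "point_vertex p x (line_value p m c x)"]) auto
  qed
qed

lemma three_distinct_avoid_two:
  "x \<noteq> y \<Longrightarrow> x \<noteq> z \<Longrightarrow> y \<noteq> z \<Longrightarrow> \<exists>w\<in>{x, y, z}. w \<noteq> u \<and> w \<noteq> v"
  by auto

lemma affine_incidence_graph_third:
  assumes p: "p \<ge> 3" and u: "u \<in> verts (affine_incidence_graph p)"
  shows "\<exists>z\<in>verts (affine_incidence_graph p). z \<noteq> u \<and> z \<noteq> v \<and> (z \<in> {..<p*p} \<longleftrightarrow> u \<in> {..<p*p})"
  using u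
proof (cases rule: affine_incidence_graph_cases)
  case (1 a b)
  have "point_vertex p 0 0 \<noteq> point_vertex p 0 1" "point_vertex p 0 0 \<noteq> point_vertex p 0 2"
    "point_vertex p 0 1 \<noteq> point_vertex p 0 2"
    using point_vertex_eq_iff[of _ p] p by simp_all
  then obtain w where "w \<in> {point_vertex p 0 0, point_vertex p 0 1, point_vertex p 0 2}" "w \<noteq> u" "w \<noteq> v"
    using three_distinct_avoid_two by blast
  then show ?thesis using 1 point_vertex_in point_vertex_side p by (intro bexI[of _ w]) auto
next
  case (2 m c)
  have "line_vertex p 0 0 \<noteq> line_vertex p 0 1" "line_vertex p 0 0 \<noteq> line_vertex p 0 2"
    "line_vertex p 0 1 \<noteq> line_vertex p 0 2"
    using line_vertex_eq_iff[of _ p] p by simp_all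
  then obtain w where "w \<in> {line_vertex p 0 0, line_vertex p 0 1, line_vertex p 0 2}" "w \<noteq> u" "w \<noteq> v"
    using three_distinct_avoid_two by blast
  then show ?thesis using 2 line_vertex_in line_vertex_side p by (intro bexI[of _ w]) auto
qed

lemma off_line_point:
  assumes "p \<ge> 2"
  shows "\<not> on_line p x ((line_value p m c x + 1) mod p) m c"
proof
  let ?y = "line_value p m c x"
  assume "on_line p x ((?y + 1) mod p) m c"
  moreover have "?y < p" "on_line p x ?y m c" using line_value assms by auto
  ultimately have "(?y + 1) mod p = ?y" using assms by (intro on_line_unique_value) auto
  then show False using add_mod_neq_self[of 1 p ?y] \<open>?y < p\<close> assms by simp
qed

lemma affine_incidence_graph_avoid_across:
  assumes p: "p \<ge> 3" and u: "u \<in> verts (affine_incidence_graph p)" and v: "v \<in> verts (affine_incidence_graph p)"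
    and across: "u \<in> {..<p*p} \<longleftrightarrow> v \<notin> {..<p*p}"
  shows "\<exists>z\<in>verts (affine_incidence_graph p). z \<noteq> u \<and> (z \<in> {..<p*p} \<longleftrightarrow> u \<in> {..<p*p})
    \<and> \<not> adj (affine_incidence_graph p) z v"
  using u
proof (cases rule: affine_incidence_graph_cases)
  case (1 a b)
  obtain m c where mc: "m < p" "c < p" "v = line_vertex p m c"
    using v across 1 point_vertex_side line_vertex_side by (cases rule: affine_incidence_graph_cases) auto
  let ?y0 = "(line_value p m c 0 + 1) mod p" and ?y1 = "(line_value p m c 1 + 1) mod p"
  have y: "?y0 < p" "?y1 < p" using p by auto
  have "point_vertex p 0 ?y0 \<noteq> point_vertex p 1 ?y1" using point_vertex_eq_iff y by simp
  then obtain x where x: "x \<in> {0, 1}" "point_vertex p x ((line_value p m c x + 1) mod p) \<noteq> u"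
    by (metis insertCI)
  then have "x < p" using p by auto
  show ?thesis using 1 mc x \<open>x < p\<close> p off_line_point[of p x m c] adj_point_line point_vertex_in point_vertex_side
    by (intro bexI[of _ "point_vertex p x ((line_value p m c x + 1) mod p)"]) auto
next
  case (2 m c)
  obtain a b where ab: "a < p" "b < p" "v = point_vertex p a b"
    using v across 2 point_vertex_side line_vertex_side by (cases rule: affine_incidence_graph_cases) auto
  have "(b + 1) mod p \<noteq> (b + 2) mod p"
    using add_mod_neq_self[of 1 p "(b + 1) mod p"] p by (simp add: mod_Suc_eq)
  then have "line_vertex p 0 ((b + 1) mod p) \<noteq> line_vertex p 0 ((b + 2) mod p)"
    using line_vertex_eq_iff p by simp
  then obtain k where k: "k \<in> {1, 2}" "line_vertex p 0 ((b + k) mod p) \<noteq> u" by (metis insertCI)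
  have "(b + k) mod p \<noteq> b" using add_mod_neq_self[OF _ _ ab(2), of k] k p by auto
  then have "\<not> on_line p a b 0 ((b + k) mod p)" using on_line_slope_0[OF ab(2)] p by simp
  then show ?thesis using 2 ab k p adj_line_point line_vertex_in line_vertex_side
    by (intro bexI[of _ "line_vertex p 0 ((b + k) mod p)"]) auto
qed

lemma affine_incidence_graph_rich: "prime p \<Longrightarrow> p \<ge> 3 \<Longrightarrow> rich (affine_incidence_graph p)"
  by (intro rich_if_bipartite[OF affine_incidence_graph_wf affine_incidence_graph_bipartite]
      affine_incidence_graph_degree affine_incidence_graph_same_side_common
      affine_incidence_graph_other_side_non_adj affine_incidence_graph_separate
      affine_incidence_graph_third affine_incidence_graph_avoid_across) auto

lemma affine_incidence_graph_no_C4: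
  assumes p: "prime p"
  shows "\<not> contains_subgraph (affine_incidence_graph p) C4"
proof
  let ?G = "affine_incidence_graph p"
  assume "contains_subgraph ?G C4"
  then obtain a b c d where cyc: "a \<in> verts ?G" "b \<in> verts ?G" "c \<in> verts ?G" "d \<in> verts ?G"
    "a \<noteq> c" "b \<noteq> d" "adj ?G a b" "adj ?G b c" "adj ?G c d" "adj ?G d a"
    by (rule contains_C4E)
  have across: "adj ?G u w \<Longrightarrow> (u \<in> {..<p*p} \<longleftrightarrow> w \<notin> {..<p*p})" for u w
    using affine_incidence_graph_bipartite unfolding bipartite_by_def by blast
  have sym: "adj ?G u w \<Longrightarrow> adj ?G w u" for u w using wf_graph_sym[OF affine_incidence_graph_wf] by blast
  have no_two_common: False
    if P: "x \<in> {..<p*p}" "z \<in> {..<p*p}" "y \<notin> {..<p*p}" "t \<notin> {..<p*p}"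
      "x \<in> verts ?G" "z \<in> verts ?G" "y \<in> verts ?G" "t \<in> verts ?G"
      "adj ?G x y" "adj ?G z y" "adj ?G x t" "adj ?G z t" "x \<noteq> z" "y \<noteq> t" for x y z t
  proof -
    obtain a1 a2 where A: "a1 < p" "a2 < p" "x = point_vertex p a1 a2"
      using P(5,1) line_vertex_side by (cases rule: affine_incidence_graph_cases) auto
    obtain c1 c2 where C: "c1 < p" "c2 < p" "z = point_vertex p c1 c2"
      using P(6,2) line_vertex_side by (cases rule: affine_incidence_graph_cases) auto
    obtain m1 e1 where L1: "m1 < p" "e1 < p" "y = line_vertex p m1 e1"
      using P(7,3) point_vertex_side by (cases rule: affine_incidence_graph_cases) auto
    obtain m2 e2 where L2: "m2 < p" "e2 < p" "t = line_vertex p m2 e2"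
      using P(8,4) point_vertex_side by (cases rule: affine_incidence_graph_cases) auto
    have "on_line p a1 a2 m1 e1" "on_line p a1 a2 m2 e2" "on_line p c1 c2 m1 e1" "on_line p c1 c2 m2 e2"
      using P(9-12) A C L1 L2 adj_point_line by auto
    moreover have "(a1,a2) \<noteq> (c1,c2)" using P(13) A C by auto
    ultimately have "m1 = m2 \<and> e1 = e2"
      using two_points_determine_line[OF p A(1) C(1) A(2) C(2) L1(1) L2(1) L1(2) L2(2)] by blast
    then show False using P(14) L1 L2 by simp
  qed
  show False
  proof (cases "a \<in> {..<p*p}")
    case True
    then have "b \<notin> {..<p*p}" "c \<in> {..<p*p}" "d \<notin> {..<p*p}" using across cyc by blast+
    then show False using no_two_common[of a c b d] True cyc sym by blast
  next
    case False
    then have "b \<in> {..<p*p}" "c \<notin> {..<p*p}" "d \<in> {..<p*p}" using across cyc by blast+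
    then show False using no_two_common[of b d c a] False cyc sym by blast
  qed
qed

lemma inj_on_image_avoids:
  assumes "inj_on f A" "finite S" "card S < card A"
  shows "\<exists>a\<in>A. f a \<notin> S"
proof (rule ccontr)
  assume "\<not> ?thesis"
  then have "f ` A \<subseteq> S" by auto
  then have "card (f ` A) \<le> card S" using assms(2) card_mono by blast
  then show False using card_image[OF assms(1)] assms(3) by simp
qed

lemma two_inj_on_images_avoid:
  assumes f: "inj_on f M" and g: "inj_on g M" and S: "finite S" and M: "finite M"
    and c: "card M > 2 * card S"
  shows "\<exists>j\<in>M. f j \<notin> S \<and> g j \<notin> S"
proof (rule ccontr)
  assume "\<not> ?thesis"
  then have sub: "M \<subseteq> {j\<in>M. f j \<in> S} \<union> {j\<in>M. g j \<in> S}" by auto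
  have "card {j\<in>M. f j \<in> S} \<le> card S"
    by (rule card_inj_on_le[OF inj_on_subset[OF f] _ S]) auto
  moreover have "card {j\<in>M. g j \<in> S} \<le> card S"
    by (rule card_inj_on_le[OF inj_on_subset[OF g] _ S]) auto
  moreover have "card M \<le> card ({j\<in>M. f j \<in> S} \<union> {j\<in>M. g j \<in> S})"
    by (rule card_mono) (use M sub in auto)
  moreover have "\<dots> \<le> card {j\<in>M. f j \<in> S} + card {j\<in>M. g j \<in> S}" by (rule card_Un_le)
  ultimately show False using c by linarith
qed

text \<open>A line avoiding S reaches a point off it through one of the p - 1 other lines through
  that point; these lines meet the given one in pairwise distinct points, so with S small some
  line and its intersection point both avoid S.\<close>
lemma line_reaches_point_avoiding:
  assumes p: "prime p" and mc: "m < p" "c < p" and ab: "a < p" "b < p"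
    and off: "\<not> on_line p a b m c" and S: "finite S" "2 * card S < p - 1"
    and avoid: "line_vertex p m c \<notin> S" "point_vertex p a b \<notin> S"
  shows "(line_vertex p m c, point_vertex p a b) \<in> (edge_rel (del_verts (affine_incidence_graph p) S))\<^sup>*"
proof -
  let ?G = "affine_incidence_graph p" and ?E = "(edge_rel (del_verts (affine_incidence_graph p) S))\<^sup>*"
  have p0: "p > 0" using prime_gt_0_nat[OF p] .
  define M where "M = {..<p} - {m}"
  define cq where "cq m' = intercept p a b m'" for m'
  have cq: "cq m' < p" "on_line p a b m' (cq m')" for m' using intercept[OF p0] cq_def by auto
  have "\<exists>r. \<exists>x y. x < p \<and> y < p \<and> r = point_vertex p x y \<and> on_line p x y m c \<and> on_line p x y m' (cq m')"
    if "m' \<in> M" for m'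
  proof -
    have "m' < p" "m' \<noteq> m" using that unfolding M_def by auto
    then obtain x y where "x < p" "y < p" "on_line p x y m c" "on_line p x y m' (cq m')"
      using lines_of_distinct_slopes_meet[OF p mc(1)] by metis
    then show ?thesis by blast
  qed
  then obtain R where R: "\<And>m'. m' \<in> M \<Longrightarrow> \<exists>x y. x < p \<and> y < p \<and> R m' = point_vertex p x y
      \<and> on_line p x y m c \<and> on_line p x y m' (cq m')"
    using someI_ex by metis
  have "inj_on R M"
  proof (rule inj_onI)
    fix m1 m2 assume m1: "m1 \<in> M" and m2: "m2 \<in> M" and eq: "R m1 = R m2"
    obtain x1 y1 where r1: "x1 < p" "y1 < p" "R m1 = point_vertex p x1 y1" "on_line p x1 y1 m c"
        "on_line p x1 y1 m1 (cq m1)" using R[OF m1] by blast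
    obtain x2 y2 where r2: "x2 < p" "y2 < p" "R m2 = point_vertex p x2 y2" "on_line p x2 y2 m2 (cq m2)"
      using R[OF m2] by blast
    have "x1 = x2 \<and> y1 = y2" using eq r1 r2 point_vertex_eq_iff by metis
    moreover have "(x1, y1) \<noteq> (a, b)" using r1(4) off by auto
    ultimately show "m1 = m2"
      using two_points_determine_line[OF p r1(1) ab(1) r1(2) ab(2) _ _ cq(1) cq(1) r1(5) _ cq(2) cq(2)] r2 m1 m2
      unfolding M_def by auto
  qed
  moreover have "inj_on (\<lambda>m'. line_vertex p m' (cq m')) M"
    unfolding inj_on_def using line_vertex_eq_iff cq by blast
  moreover have "finite M" "card M > 2 * card S" using S mc(1) unfolding M_def by simp_all
  ultimately obtain m' where m': "m' \<in> M" "line_vertex p m' (cq m') \<notin> S" "R m' \<notin> S"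
    using two_inj_on_images_avoid[OF _ _ S(1)] by blast
  obtain x y where r: "x < p" "y < p" "R m' = point_vertex p x y" "on_line p x y m c" "on_line p x y m' (cq m')"
    using R[OF m'(1)] by blast
  have "m' < p" using m' unfolding M_def by simp
  have "(line_vertex p m c, point_vertex p x y) \<in> ?E"
    using mc r avoid m' by (intro del_verts_edge_reachable) (auto simp: adj_line_point point_vertex_in line_vertex_in)
  also have "(point_vertex p x y, line_vertex p m' (cq m')) \<in> ?E"
    using r cq \<open>m' < p\<close> m' by (intro del_verts_edge_reachable) (auto simp: adj_point_line point_vertex_in line_vertex_in)
  also have "(line_vertex p m' (cq m'), point_vertex p a b) \<in> ?E"
    using ab cq \<open>m' < p\<close> m' avoid by (intro del_verts_edge_reachable) (auto simp: adj_line_point point_vertex_in line_vertex_in)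
  finally show ?thesis .
qed

lemma points_reach_avoiding:
  assumes p: "prime p" and ab: "a < p" "b < p" and ab': "a' < p" "b' < p"
    and S: "finite S" "2 * card S < p - 1"
    and avoid: "point_vertex p a b \<notin> S" "point_vertex p a' b' \<notin> S"
  shows "(point_vertex p a b, point_vertex p a' b') \<in> (edge_rel (del_verts (affine_incidence_graph p) S))\<^sup>*"
proof -
  let ?E = "(edge_rel (del_verts (affine_incidence_graph p) S))\<^sup>*"
  have p0: "p > 0" using prime_gt_0_nat[OF p] .
  have "inj_on (\<lambda>m. line_vertex p m (intercept p a b m)) {..<p}"
    unfolding inj_on_def using line_vertex_eq_iff intercept[OF p0] by blast
  moreover have "card S < card {..<p}" using S by simp
  ultimately obtain m where m: "m < p" "line_vertex p m (intercept p a b m) \<notin> S"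
    using inj_on_image_avoids[OF _ S(1)] by blast
  define c where "c = intercept p a b m"
  have c: "c < p" "on_line p a b m c" using intercept[OF p0] c_def by auto
  have first: "(point_vertex p a b, line_vertex p m c) \<in> ?E"
    using ab m c avoid c_def
    by (intro del_verts_edge_reachable) (auto simp: adj_point_line point_vertex_in line_vertex_in)
  show ?thesis
  proof (cases "on_line p a' b' m c")
    case True
    then have "(line_vertex p m c, point_vertex p a' b') \<in> ?E"
      using ab' m c avoid c_def
      by (intro del_verts_edge_reachable) (auto simp: adj_line_point point_vertex_in line_vertex_in)
    with first show ?thesis by (rule rtrancl_trans)
  next
    case False
    with first show ?thesis
      using line_reaches_point_avoiding[OF p m(1) c(1) ab' False S] m avoid c_def by (auto intro: rtrancl_trans)
  qed
qed

lemma affine_incidence_graph_k_connected: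
  assumes p: "prime p" and k: "k \<ge> 1" and pk: "p \<ge> 2 * k + 1"
  shows "k_connected k (affine_incidence_graph p)"
proof (rule k_connectedI[OF affine_incidence_graph_wf k])
  let ?G = "affine_incidence_graph p"
  have p0: "p > 0" using prime_gt_0_nat[OF p] .
  have "p \<le> p * p" using p0 by simp
  then have "k < p * p" using pk by linarith
  then show "k < card (verts ?G)" by (simp add: verts_affine_incidence_graph)
  fix S assume S: "S \<subseteq> verts ?G" "card S < k"
  let ?E = "(edge_rel (del_verts ?G S))\<^sup>*"
  have finS: "finite S" using S(1) finite_subset by (auto simp: verts_affine_incidence_graph)
  have small: "2 * card S < p - 1" using S pk by linarith
  have "inj_on (point_vertex p 0) {..<p}" unfolding inj_on_def using point_vertex_eq_iff by blast
  moreover have "card S < card {..<p}" using small by simp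
  ultimately obtain j where j: "j < p" "point_vertex p 0 j \<notin> S"
    using inj_on_image_avoids[OF _ finS] by blast
  show "connected (del_verts ?G S)"
  proof (rule connected_if_all_reach[OF wf_graph_del_verts[OF affine_incidence_graph_wf]])
    show "point_vertex p 0 j \<in> verts (del_verts ?G S)" using point_vertex_in j p0 by auto
    fix u assume "u \<in> verts (del_verts ?G S)"
    then have u: "u \<in> verts ?G" "u \<notin> S" by auto
    from u(1) show "(u, point_vertex p 0 j) \<in> ?E"
    proof (cases rule: affine_incidence_graph_cases)
      case (1 a b)
      then show ?thesis using points_reach_avoiding[OF p 1(1,2) p0 j(1) finS small] u j by simp
    next
      case (2 m c)
      have "inj_on (\<lambda>x. point_vertex p x (line_value p m c x)) {..<p}"
        unfolding inj_on_def using point_vertex_eq_iff line_value[OF p0] by blast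
      moreover have "card S < card {..<p}" using small by simp
      ultimately obtain x where x: "x < p" "point_vertex p x (line_value p m c x) \<notin> S"
        using inj_on_image_avoids[OF _ finS] by blast
      have y: "line_value p m c x < p" "on_line p x (line_value p m c x) m c" using line_value[OF p0] by auto
      have "(u, point_vertex p x (line_value p m c x)) \<in> ?E"
        using u 2 x y by (intro del_verts_edge_reachable) (auto simp: adj_line_point point_vertex_in)
      moreover have "(point_vertex p x (line_value p m c x), point_vertex p 0 j) \<in> ?E"
        using points_reach_avoiding[OF p x(1) y(1) p0 j(1) finS small x(2) j(2)] .
      ultimately show ?thesis by (rule rtrancl_trans)
    qed
  qed
qed

lemma C4_definer_separates_rich_graphs:
  assumes "eventually_defines kappa C4 \<Phi>"
  shows "\<exists>G H. wf_graph G \<and> wf_graph H \<and> rich G \<and> rich H \<and> verts G \<noteq> {} \<and> verts H \<noteq> {}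
    \<and> models G \<Phi> \<noteq> models H \<Phi>"
proof -
  obtain k where k: "\<And>G. wf_graph G \<Longrightarrow> connected G \<Longrightarrow> kappa G \<ge> k \<Longrightarrow>
      models G \<Phi> \<longleftrightarrow> contains_subgraph G C4"
    using assms unfolding eventually_defines_def by blast
  obtain p where p: "prime p" "p > 2 * (k + 1) + 3" using bigger_prime by blast
  let ?G = "affine_incidence_graph p" and ?H = "Knn_minus_cycle (k + 5)"
  have kG: "k_connected (k + 1) ?G" using affine_incidence_graph_k_connected[OF p(1)] p(2) by simp
  have kH: "k_connected (k + 1) ?H" using Knn_minus_cycle_k_connected[of "k + 1" "k + 5"] by simp
  have conn: "connected ?G" "connected ?H" using kG kH unfolding k_connected_def by blast+
  then have "verts ?G \<noteq> {}" "verts ?H \<noteq> {}" unfolding connected_def by blast+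
  moreover have "models ?G \<Phi> \<noteq> models ?H \<Phi>"
    using k[OF affine_incidence_graph_wf conn(1)] k[OF Knn_minus_cycle_wf conn(2)]
      k_connected_le_kappa[OF kG] k_connected_le_kappa[OF kH]
      affine_incidence_graph_no_C4[OF p(1)] Knn_minus_cycle_C4[of "k + 5"] by simp
  moreover have "rich ?G" "rich ?H"
    using affine_incidence_graph_rich[OF p(1)] Knn_minus_cycle_rich[of "k + 5"] p(2) by simp_all
  ultimately show ?thesis using affine_incidence_graph_wf Knn_minus_cycle_wf by blast
qed

lemma sentence_of_eventually_defines: "eventually_defines \<pi> F \<Phi> \<Longrightarrow> sentence \<Phi>"
  unfolding eventually_defines_def by blast

lemma P4_definer_width: "eventually_defines nverts P4 \<Phi> \<Longrightarrow> 2 \<le> width \<Phi>"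
proof (rule ccontr)
  assume ev: "eventually_defines nverts P4 \<Phi>" and "\<not> 2 \<le> width \<Phi>"
  then have "width \<Phi> \<le> 1" by simp
  obtain n where n: "n \<ge> 3" "models (star n) \<Phi> \<noteq> models (star_plus_edge n) \<Phi>"
    using P4_definer_separates_stars[OF ev] by blast
  have "pebble_extendable 1 (star n) (star_plus_edge n)"
    using n(1) by (intro pebble_extendable_1 star_wf star_plus_edge_wf) auto
  then show False
    using pebble_extendable_models_eq \<open>width \<Phi> \<le> 1\<close> sentence_of_eventually_defines[OF ev] n(2) by blast
qed

lemma P4_definer_qdepth: "eventually_defines nverts P4 \<Phi> \<Longrightarrow> 3 \<le> qdepth \<Phi>"
proof (rule ccontr)
  assume ev: "eventually_defines nverts P4 \<Phi>" and "\<not> 3 \<le> qdepth \<Phi>"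
  then have "qdepth \<Phi> \<le> 2" by simp
  obtain n where n: "n \<ge> 3" "models (star n) \<Phi> \<noteq> models (star_plus_edge n) \<Phi>"
    using P4_definer_separates_stars[OF ev] by blast
  then show False
    using duplicator_wins_models_eq[OF duplicator_wins_2_stars[OF n(1)] \<open>qdepth \<Phi> \<le> 2\<close>]
      sentence_of_eventually_defines[OF ev] by blast
qed

lemma C4_definer_qdepth: "eventually_defines kappa C4 \<Phi> \<Longrightarrow> 4 \<le> qdepth \<Phi>"
proof (rule ccontr)
  assume ev: "eventually_defines kappa C4 \<Phi>" and "\<not> 4 \<le> qdepth \<Phi>"
  then have "qdepth \<Phi> \<le> 3" by simp
  obtain G H where "wf_graph G" "wf_graph H" "rich G" "rich H" "verts G \<noteq> {}" "verts H \<noteq> {}"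
    "models G \<Phi> \<noteq> models H \<Phi>"
    using C4_definer_separates_rich_graphs[OF ev] by blast
  then show False
    using duplicator_wins_models_eq[OF duplicator_wins_3_rich \<open>qdepth \<Phi> \<le> 3\<close>]
      sentence_of_eventually_defines[OF ev] by blast
qed

lemma C4_definer_width: "eventually_defines kappa C4 \<Phi> \<Longrightarrow> 3 \<le> width \<Phi>"
proof (rule ccontr)
  assume ev: "eventually_defines kappa C4 \<Phi>" and "\<not> 3 \<le> width \<Phi>"
  then have "width \<Phi> \<le> 2" by simp
  obtain G H where GH: "wf_graph G" "wf_graph H" "rich G" "rich H" "verts G \<noteq> {}" "verts H \<noteq> {}"
    "models G \<Phi> \<noteq> models H \<Phi>"
    using C4_definer_separates_rich_graphs[OF ev] by blast
  have "pebble_extendable 2 G H"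
    using GH(1-6) rich_not_isolated_dominating by (intro pebble_extendable_2) auto
  then show False
    using pebble_extendable_models_eq \<open>width \<Phi> \<le> 2\<close> sentence_of_eventually_defines[OF ev] GH(7) by blast
qed

lemma D_param_eqI:
  "eventually_defines \<pi> F \<Phi> \<Longrightarrow> qdepth \<Phi> = d \<Longrightarrow> (\<And>\<Psi>. eventually_defines \<pi> F \<Psi> \<Longrightarrow> d \<le> qdepth \<Psi>)
    \<Longrightarrow> D_param \<pi> F = d"
  unfolding D_param_def by (rule Least_equality) auto

lemma W_param_eqI:
  "eventually_defines \<pi> F \<Phi> \<Longrightarrow> width \<Phi> = w \<Longrightarrow> (\<And>\<Psi>. eventually_defines \<pi> F \<Psi> \<Longrightarrow> w \<le> width \<Psi>)
    \<Longrightarrow> W_param \<pi> F = w"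
  unfolding W_param_def by (rule Least_equality) auto

lemma W_param_geI:
  "eventually_defines \<pi> F \<Phi> \<Longrightarrow> (\<And>\<Psi>. eventually_defines \<pi> F \<Psi> \<Longrightarrow> w \<le> width \<Psi>)
    \<Longrightarrow> w \<le> W_param \<pi> F"
  unfolding W_param_def by (rule LeastI2_ex) auto

theorem theorem13:
  shows "W_param nverts P4 = 2 \<and> D_param nverts P4 = 3
       \<and> D_param kappa C4 = 4 \<and> W_param kappa C4 \<ge> 3"
  using W_param_eqI[OF P4_eventually_defined width_P4_sentence P4_definer_width]
    D_param_eqI[OF P4_eventually_defined qdepth_P4_sentence P4_definer_qdepth]
    D_param_eqI[OF C4_eventually_defined qdepth_C4_sentence C4_definer_qdepth]
    W_param_geI[OF C4_eventually_defined C4_definer_width]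
  by blast

end
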